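(* Let $d=2^N$ and let $O_1,\ldots,O_M$ be a set of distinct non-identity $N$-qubit Pauli observables. If a non-adaptive algorithm measures each copy of the unknown state with one of the measurements $\mathcal{M}_i:=\{\frac{\mathbb{I}_d-O_i}{2},\frac{\mathbb{I}_d+O_i}{2}\}$, $i\in[M]$, then under $\gamma$-adversarial corruption it must incur an error of $\varepsilon=\Omega(\gamma M)$ in estimating $\operatorname{Tr}[O_i\rho]$ for some $i$.
   Context: An $N$-qubit Pauli observable is a tensor product $P_1\otimes\cdots\otimes P_N$ with each $P_k\in\{I,X,Y,Z\}$ (single-qubit Pauli matrices). Shadow tomography: output $E_1,\ldots,E_M$ with $|E_i-\operatorname{Tr}[O_i\rho]|\le\varepsilon$ for all $i$ with high (constant) probability. Non-adaptive: the measurement for each copy is chosen without depending on previous outcomes. $\gamma$-adversarial corruption: after all outcomes are obtained, an adversary with perfect knowledge of the measurements arbitrarily changes a $\gamma$-fraction of them, and the algorithm only sees the corrupted outcomes. *)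

theory Defs
  imports "Jordan_Normal_Form.Matrix" "HOL-Probability.Product_PMF"
begin

definition kron :: "complex mat \<Rightarrow> complex mat \<Rightarrow> complex mat" where
  "kron A B = Matrix.mat (dim_row A * dim_row B) (dim_col A * dim_col B)
     (\<lambda>(i,j). A $$ (i div dim_row B, j div dim_col B) * B $$ (i mod dim_row B, j mod dim_col B))"

definition pauli_X :: "complex mat" where
  "pauli_X = Matrix.mat 2 2 (\<lambda>(i,j). if i \<noteq> j then 1 else 0)"

definition pauli_Y :: "complex mat" where
  "pauli_Y = Matrix.mat 2 2 (\<lambda>(i,j). if i = 0 \<and> j = 1 then - \<i> else if i = 1 \<and> j = 0 then \<i> else 0)"

definition pauli_Z :: "complex mat" where
  "pauli_Z = Matrix.mat 2 2 (\<lambda>(i,j). if i = j then (if i = 0 then 1 else -1) else 0)"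

definition pauli1 :: "nat \<Rightarrow> complex mat" where
  "pauli1 k = (if k = 0 then 1\<^sub>m 2 else if k = 1 then pauli_X else if k = 2 then pauli_Y else pauli_Z)"

definition is_pauli_string :: "nat \<Rightarrow> nat list \<Rightarrow> bool" where
  "is_pauli_string N p \<longleftrightarrow> length p = N \<and> (\<forall>k \<in> set p. k < 4)"

definition pauli_obs :: "nat list \<Rightarrow> complex mat" where
  "pauli_obs p = foldr (\<lambda>k A. kron (pauli1 k) A) p (1\<^sub>m 1)"

definition mtrace :: "complex mat \<Rightarrow> complex" where
  "mtrace A = (\<Sum>i<dim_row A. A $$ (i,i))"

definition density_matrix :: "nat \<Rightarrow> complex mat \<Rightarrow> bool" where
  "density_matrix d \<rho> \<longleftrightarrow> \<rho> \<in> carrier_mat d d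
     \<and> (\<forall>i<d. \<forall>j<d. \<rho> $$ (i,j) = cnj (\<rho> $$ (j,i)))
     \<and> (\<forall>v :: nat \<Rightarrow> complex. 0 \<le> Re (\<Sum>i<d. \<Sum>j<d. cnj (v i) * \<rho> $$ (i,j) * v j))
     \<and> mtrace \<rho> = 1"

text \<open>The two-outcome measurement {(I-O)/2, (I+O)/2}: outcome True is +1 (projector (I+O)/2),
  outcome False is -1 (projector (I-O)/2).\<close>
definition meas_proj :: "complex mat \<Rightarrow> bool \<Rightarrow> complex mat" where
  "meas_proj Q b = (1/2) \<cdot>\<^sub>m (1\<^sub>m (dim_row Q) + (if b then 1 else -1) \<cdot>\<^sub>m Q)"

definition born_prob :: "complex mat \<Rightarrow> complex mat \<Rightarrow> bool \<Rightarrow> real" where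
  "born_prob Q \<rho> b = Re (mtrace (meas_proj Q b * \<rho>))"

text \<open>Expectation value Tr[O rho] (real for Hermitian O and rho).\<close>
definition expval :: "complex mat \<Rightarrow> complex mat \<Rightarrow> real" where
  "expval Q \<rho> = Re (mtrace (Q * \<rho>))"

text \<open>Distribution of the (uncorrupted) outcomes of T independent copies of rho, copy t being measured
  with the measurement of index s t.  Outcomes are vectors indexed by {..<T}.\<close>
definition outcome_dist ::
  "(nat \<Rightarrow> nat list) \<Rightarrow> nat \<Rightarrow> (nat \<Rightarrow> nat) \<Rightarrow> complex mat \<Rightarrow> (nat \<Rightarrow> bool) pmf" where
  "outcome_dist ps T s \<rho> = Pi_pmf {..<T} False (\<lambda>t. bernoulli_pmf (born_prob (pauli_obs (ps (s t))) \<rho> True))"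

text \<open>A (deterministic) gamma-adversary sees the measurement schedule and the outcomes and changes
  at most a gamma-fraction of the T outcomes.\<close>
definition admissible_adversary ::
  "real \<Rightarrow> nat \<Rightarrow> ((nat \<Rightarrow> nat) \<Rightarrow> (nat \<Rightarrow> bool) \<Rightarrow> (nat \<Rightarrow> bool)) \<Rightarrow> bool" where
  "admissible_adversary \<gamma> T adv \<longleftrightarrow>
     (\<forall>s x. {t. adv s x t \<noteq> x t} \<subseteq> {..<T} \<and> real (card {t. adv s x t \<noteq> x t}) \<le> \<gamma> * real T)"

text \<open>A randomized non-adaptive algorithm using T copies is a probability distribution over pairs
  (schedule s, estimator e): s t is the index of the measurement applied to copy t (fixed before any
  outcome is seen), and e maps the corrupted outcome vector to estimates E_0, ..., E_(M-1).\<close>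
type_synonym nonadaptive_alg = "((nat \<Rightarrow> nat) \<times> ((nat \<Rightarrow> bool) \<Rightarrow> (nat \<Rightarrow> real))) pmf"

definition valid_alg :: "nat \<Rightarrow> nat \<Rightarrow> nonadaptive_alg \<Rightarrow> bool" where
  "valid_alg M T A \<longleftrightarrow> (\<forall>(s,e) \<in> set_pmf A. \<forall>t<T. s t < M)"

definition estimates_dist ::
  "(nat \<Rightarrow> nat list) \<Rightarrow> nat \<Rightarrow> nonadaptive_alg \<Rightarrow> complex mat
     \<Rightarrow> ((nat \<Rightarrow> nat) \<Rightarrow> (nat \<Rightarrow> bool) \<Rightarrow> (nat \<Rightarrow> bool)) \<Rightarrow> (nat \<Rightarrow> real) pmf" where
  "estimates_dist ps T A \<rho> adv =
     bind_pmf A (\<lambda>(s,e). map_pmf (\<lambda>x. e (adv s x)) (outcome_dist ps T s \<rho>))"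

definition success_prob ::
  "(nat \<Rightarrow> nat list) \<Rightarrow> nat \<Rightarrow> nat \<Rightarrow> nonadaptive_alg \<Rightarrow> complex mat
     \<Rightarrow> ((nat \<Rightarrow> nat) \<Rightarrow> (nat \<Rightarrow> bool) \<Rightarrow> (nat \<Rightarrow> bool)) \<Rightarrow> real \<Rightarrow> real" where
  "success_prob ps M T A \<rho> adv \<epsilon> =
     measure_pmf.prob (estimates_dist ps T A \<rho> adv)
       {E. \<forall>j<M. \<bar>E j - expval (pauli_obs (ps j)) \<rho>\<bar> \<le> \<epsilon>}"

end

(*
  Let O\<^sub>i be the observable that the algorithm measures least often in expectation: at most a
  1/M fraction of the T copies, hence on at most k = 12T/M copies for most schedules. The states
  (I \<plusminus> \<delta> O\<^sub>i)/2\<^sup>N have Tr[O\<^sub>i \<rho>] = \<plusminus>\<delta>, give fair coins for every other measurement and coins of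
  bias (1 \<plusminus> \<delta>)/2 for O\<^sub>i, so by Le Cam's two-point argument \<epsilon> \<ge> \<delta> as soon as the outcome
  distributions, after corruption, cannot be told apart.

  If \<gamma>\<^sup>2 M T is large, the adversary reads the \<plusminus>1 outcomes of O\<^sub>i as a walk ending at w and, when
  0 < w \<le> \<gamma>T, flips w of the +1 steps, each time the one right after the last minimum of the walk.
  This is a bijection from walks ending at w onto walks ending at -w, so under +\<delta> the corrupted
  outcomes are distributed as the honest ones under -\<delta>, except when |w| > \<gamma>T, which Chebyshev's
  inequality makes unlikely for \<delta> = O(\<gamma>M). If \<gamma>\<^sup>2 M T is small, no corruption is needed: the
  \<chi>\<^sup>2-divergence (1 + \<delta>\<^sup>2)\<^sup>k - 1 between the biased and the fair coins is small for \<delta> = O(\<gamma>M).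
*)

theory Submission
  imports Defs
begin

section \<open>Kronecker products and Pauli observables\<close>

lemma sum_lessThan_mult:
  fixes f :: "nat \<Rightarrow> 'a::comm_monoid_add"
  shows "(\<Sum>l<n * m. f l) = (\<Sum>a<n. \<Sum>b<m. f (a * m + b))"
proof (induction n)
  case (Suc n)
  have "(\<Sum>l<Suc n * m. f l) = (\<Sum>l<n * m. f l) + (\<Sum>l\<in>{n * m..<n * m + m}. f l)"
    by (simp add: add.commute sum.atLeastLessThan_concat[symmetric] lessThan_atLeast0)
  also have "(\<Sum>l\<in>{n * m..<n * m + m}. f l) = (\<Sum>b<m. f (n * m + b))"
    using sum.shift_bounds_nat_ivl[of f 0 "n * m" m] by (simp add: lessThan_atLeast0 add.commute)
  finally show ?case using Suc by simp
qed simp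

lemma mult_add_less_mult: "a < n \<Longrightarrow> b < m \<Longrightarrow> a * m + b < n * (m::nat)"
proof -
  assume "a < n" "b < m"
  then have "a * m + b < (a + 1) * m" by simp
  also have "\<dots> \<le> n * m" using \<open>a < n\<close> by (intro mult_right_mono) auto
  finally show ?thesis .
qed

lemma kron_carrier_mat:
  "A \<in> carrier_mat n n \<Longrightarrow> B \<in> carrier_mat m m \<Longrightarrow> kron A B \<in> carrier_mat (n * m) (n * m)"
  by (simp add: kron_def)

lemma index_kron:
  "A \<in> carrier_mat n n \<Longrightarrow> B \<in> carrier_mat m m \<Longrightarrow> i < n * m \<Longrightarrow> j < n * m \<Longrightarrow>
   kron A B $$ (i, j) = A $$ (i div m, j div m) * B $$ (i mod m, j mod m)"
  by (simp add: kron_def)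

lemma kron_mult:
  assumes A: "A \<in> carrier_mat n n" and C: "C \<in> carrier_mat n n"
    and B: "B \<in> carrier_mat m m" and D: "D \<in> carrier_mat m m"
  shows "kron A B * kron C D = kron (A * C) (B * D)"
proof (rule eq_matI)
  fix i j assume "i < dim_row (kron (A * C) (B * D))" "j < dim_col (kron (A * C) (B * D))"
  then have i: "i < n * m" and j: "j < n * m" using assms by (auto simp: kron_def)
  then have m: "m > 0" by (cases m) auto
  have ij: "i div m < n" "j div m < n" using i j by (auto simp: less_mult_imp_div_less)
  have "(kron A B * kron C D) $$ (i, j) = (\<Sum>l<n * m. kron A B $$ (i, l) * kron C D $$ (l, j))"
    using assms i j by (simp add: kron_def scalar_prod_def atLeast0LessThan)
  also have "\<dots> = (\<Sum>a<n. \<Sum>b<m.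
      (A $$ (i div m, a) * C $$ (a, j div m)) * (B $$ (i mod m, b) * D $$ (b, j mod m)))"
    unfolding sum_lessThan_mult using assms i j m
    by (intro sum.cong refl) (simp add: index_kron mult_add_less_mult)
  also have "\<dots> = kron (A * C) (B * D) $$ (i, j)"
    using assms i j ij m by (simp add: kron_def scalar_prod_def atLeast0LessThan sum_product)
  finally show "(kron A B * kron C D) $$ (i, j) = kron (A * C) (B * D) $$ (i, j)" .
qed (use assms in \<open>auto simp: kron_def\<close>)

lemma mtrace_kron:
  assumes "A \<in> carrier_mat n n" and "B \<in> carrier_mat m m"
  shows "mtrace (kron A B) = mtrace A * mtrace B"
proof -
  have "mtrace (kron A B) = (\<Sum>a<n. \<Sum>b<m. kron A B $$ (a * m + b, a * m + b))"
    using kron_carrier_mat[OF assms] by (simp add: mtrace_def sum_lessThan_mult)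
  also have "\<dots> = (\<Sum>a<n. \<Sum>b<m. A $$ (a, a) * B $$ (b, b))"
    using assms by (intro sum.cong refl) (simp add: index_kron mult_add_less_mult)
  finally show ?thesis
    using assms by (simp add: mtrace_def sum_product)
qed

lemma kron_one_mat: "kron (1\<^sub>m n) (1\<^sub>m m) = 1\<^sub>m (n * m)"
proof (rule eq_matI)
  fix i j assume "i < dim_row (1\<^sub>m (n * m))" "j < dim_col (1\<^sub>m (n * m))"
  then have i: "i < n * m" and j: "j < n * m" by auto
  then have m: "m > 0" by (cases m) auto
  have "i = j \<longleftrightarrow> i div m = j div m \<and> i mod m = j mod m"
  proof
    assume "i div m = j div m \<and> i mod m = j mod m"
    then have "i div m * m + i mod m = j div m * m + j mod m" by simp
    then show "i = j" by (simp only: div_mult_mod_eq)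
  qed simp
  moreover have "kron (1\<^sub>m n) (1\<^sub>m m) $$ (i, j) = 1\<^sub>m n $$ (i div m, j div m) * 1\<^sub>m m $$ (i mod m, j mod m)"
    using i j by (intro index_kron) auto
  ultimately show "kron (1\<^sub>m n) (1\<^sub>m m) $$ (i, j) = 1\<^sub>m (n * m) $$ (i, j)"
    using i j m by (simp add: less_mult_imp_div_less)
qed (auto simp: kron_def)

definition hermitian :: "complex mat \<Rightarrow> bool" where
  "hermitian A \<longleftrightarrow> (\<forall>i<dim_row A. \<forall>j<dim_row A. A $$ (i, j) = cnj (A $$ (j, i)))"

lemma hermitian_kron:
  assumes A: "A \<in> carrier_mat n n" and B: "B \<in> carrier_mat m m"
    and "hermitian A" "hermitian B"
  shows "hermitian (kron A B)"
  unfolding hermitian_def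
proof (intro allI impI)
  fix i j assume "i < dim_row (kron A B)" "j < dim_row (kron A B)"
  then have i: "i < n * m" and j: "j < n * m" using assms by (auto simp: kron_def)
  then have "m > 0" by (cases m) auto
  then have "i div m < n" "j div m < n" "i mod m < m" "j mod m < m"
    using i j by (auto simp: less_mult_imp_div_less)
  moreover have "dim_row A = n" "dim_row B = m" using A B by auto
  ultimately have "A $$ (i div m, j div m) = cnj (A $$ (j div m, i div m))"
    and "B $$ (i mod m, j mod m) = cnj (B $$ (j mod m, i mod m))"
    using \<open>hermitian A\<close> \<open>hermitian B\<close> unfolding hermitian_def by blast+
  then show "kron A B $$ (i, j) = cnj (kron A B $$ (j, i))"
    using assms i j by (simp add: index_kron)
qed

lemma pauli1_carrier_mat: "pauli1 k \<in> carrier_mat 2 2"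
  by (simp add: pauli1_def pauli_X_def pauli_Y_def pauli_Z_def)

lemma pauli1_hermitian: "hermitian (pauli1 k)"
  by (auto simp: hermitian_def pauli1_def pauli_X_def pauli_Y_def pauli_Z_def less_2_cases_iff)

lemma pauli1_square: "pauli1 k * pauli1 k = 1\<^sub>m 2"
  by (rule eq_matI)
    (auto simp: pauli1_def pauli_X_def pauli_Y_def pauli_Z_def less_2_cases_iff scalar_prod_def
      numeral_2_eq_2)

lemma mtrace_pauli1_mult:
  "a < 4 \<Longrightarrow> b < 4 \<Longrightarrow> mtrace (pauli1 a * pauli1 b) = (if a = b then 2 else 0)"
  by (auto simp: pauli1_def pauli_X_def pauli_Y_def pauli_Z_def mtrace_def scalar_prod_def
      numeral_2_eq_2 eval_nat_numeral less_Suc_eq)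

lemma pauli_obs_Cons: "pauli_obs (k # p) = kron (pauli1 k) (pauli_obs p)"
  by (simp add: pauli_obs_def)

lemma pauli_obs_carrier_mat: "pauli_obs p \<in> carrier_mat (2 ^ length p) (2 ^ length p)"
  by (induction p) (auto simp: pauli_obs_def[of "[]"] pauli_obs_Cons
      intro: kron_carrier_mat[OF pauli1_carrier_mat, simplified])

lemma pauli_obs_hermitian: "hermitian (pauli_obs p)"
proof (induction p)
  case (Cons k p)
  then show ?case
    unfolding pauli_obs_Cons
    by (rule hermitian_kron[OF pauli1_carrier_mat pauli_obs_carrier_mat pauli1_hermitian])
qed (simp add: pauli_obs_def hermitian_def)

lemma pauli_obs_square: "pauli_obs p * pauli_obs p = 1\<^sub>m (2 ^ length p)"
proof (induction p)
  case (Cons k p)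
  then show ?case
    by (simp add: pauli_obs_Cons kron_mult[OF pauli1_carrier_mat pauli1_carrier_mat
          pauli_obs_carrier_mat pauli_obs_carrier_mat] pauli1_square kron_one_mat)
qed (simp add: pauli_obs_def)

lemma mtrace_pauli_obs_mult:
  assumes "length p = length q" "\<forall>k\<in>set p. k < 4" "\<forall>k\<in>set q. k < 4"
  shows "mtrace (pauli_obs p * pauli_obs q) = (if p = q then 2 ^ length p else 0)"
  using assms
proof (induction p arbitrary: q)
  case (Cons a p)
  then obtain b q' where q: "q = b # q'" and len: "length p = length q'"
    by (cases q) auto
  have "mtrace (pauli_obs (a # p) * pauli_obs q)
      = mtrace (kron (pauli1 a * pauli1 b) (pauli_obs p * pauli_obs q'))"
    using pauli_obs_carrier_mat[of q'] len
    by (simp add: q pauli_obs_Cons kron_mult[OF pauli1_carrier_mat pauli1_carrier_mat pauli_obs_carrier_mat])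
  also have "\<dots> = mtrace (pauli1 a * pauli1 b) * mtrace (pauli_obs p * pauli_obs q')"
    using pauli_obs_carrier_mat[of p] pauli_obs_carrier_mat[of q'] len
    by (intro mtrace_kron) (auto intro: mult_carrier_mat[OF pauli1_carrier_mat pauli1_carrier_mat])
  finally show ?case
    using Cons mtrace_pauli1_mult[of a b] len q by auto
qed (simp add: pauli_obs_def mtrace_def)

lemma pauli_obs_replicate_0: "pauli_obs (replicate n 0) = 1\<^sub>m (2 ^ n)"
  by (induction n) (simp_all add: pauli_obs_def[of "[]"] pauli_obs_Cons pauli1_def kron_one_mat)

lemma mtrace_pauli_obs:
  assumes "is_pauli_string n p" "p \<noteq> replicate n 0"
  shows "mtrace (pauli_obs p) = 0"
proof -
  have "mtrace (pauli_obs p) = mtrace (pauli_obs p * pauli_obs (replicate n 0))"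
    using pauli_obs_carrier_mat[of p] assms by (simp add: pauli_obs_replicate_0 is_pauli_string_def)
  also have "\<dots> = 0"
    using assms by (simp add: mtrace_pauli_obs_mult is_pauli_string_def)
  finally show ?thesis .
qed

section \<open>Perturbations of the maximally mixed state\<close>

lemma mtrace_add:
  "A \<in> carrier_mat n n \<Longrightarrow> B \<in> carrier_mat n n \<Longrightarrow> mtrace (A + B) = mtrace A + mtrace B"
  by (simp add: mtrace_def sum.distrib)

lemma mtrace_smult: "A \<in> carrier_mat n n \<Longrightarrow> mtrace (c \<cdot>\<^sub>m A) = c * mtrace A"
  by (simp add: mtrace_def sum_distrib_left)

lemma mtrace_one_mat: "mtrace (1\<^sub>m n) = of_nat n"
  by (simp add: mtrace_def)

definition perturbed_state :: "nat \<Rightarrow> real \<Rightarrow> complex mat \<Rightarrow> complex mat" where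
  "perturbed_state d \<delta> X = (1 / of_nat d) \<cdot>\<^sub>m 1\<^sub>m d + (of_real \<delta> / of_nat d) \<cdot>\<^sub>m X"

lemma perturbed_state_carrier_mat:
  "X \<in> carrier_mat d d \<Longrightarrow> perturbed_state d \<delta> X \<in> carrier_mat d d"
  by (simp add: perturbed_state_def)

lemma index_perturbed_state:
  "X \<in> carrier_mat d d \<Longrightarrow> i < d \<Longrightarrow> j < d \<Longrightarrow>
   perturbed_state d \<delta> X $$ (i, j) = ((if i = j then 1 else 0) + of_real \<delta> * X $$ (i, j)) / of_nat d"
  by (simp add: perturbed_state_def add_divide_distrib)

lemma mtrace_mult_perturbed_state:
  assumes "Q \<in> carrier_mat d d" "X \<in> carrier_mat d d"
  shows "mtrace (Q * perturbed_state d \<delta> X) = (mtrace Q + of_real \<delta> * mtrace (Q * X)) / of_nat d"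
proof -
  have "Q * perturbed_state d \<delta> X
      = Q * ((1 / of_nat d) \<cdot>\<^sub>m 1\<^sub>m d) + Q * ((of_real \<delta> / of_nat d) \<cdot>\<^sub>m X)"
    unfolding perturbed_state_def using assms by (intro mult_add_distrib_mat) auto
  also have "\<dots> = (1 / of_nat d) \<cdot>\<^sub>m Q + (of_real \<delta> / of_nat d) \<cdot>\<^sub>m (Q * X)"
    using assms by (simp add: mult_smult_distrib[OF assms(1) one_carrier_mat] mult_smult_distrib[OF assms])
  finally have "Q * perturbed_state d \<delta> X = (1 / of_nat d) \<cdot>\<^sub>m Q + (of_real \<delta> / of_nat d) \<cdot>\<^sub>m (Q * X)" .
  then show ?thesis
    using assms
    by (simp add: mtrace_add[of _ d] mtrace_smult[of _ d] mtrace_smult[OF mult_carrier_mat[OF assms]]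
        add_divide_distrib)
qed

lemma mtrace_perturbed_state:
  assumes "X \<in> carrier_mat d d" "mtrace X = 0" "d > 0"
  shows "mtrace (perturbed_state d \<delta> X) = 1"
  using mtrace_mult_perturbed_state[of "1\<^sub>m d" d X \<delta>] assms perturbed_state_carrier_mat[of X d \<delta>]
  by (simp add: mtrace_one_mat)

lemma expval_perturbed_state:
  assumes "Q \<in> carrier_mat d d" "X \<in> carrier_mat d d" "mtrace Q = 0"
  shows "expval Q (perturbed_state d \<delta> X) = \<delta> * Re (mtrace (Q * X)) / d"
  using assms by (simp add: expval_def mtrace_mult_perturbed_state)

lemma born_prob_True:
  assumes "Q \<in> carrier_mat d d" "\<rho> \<in> carrier_mat d d" "mtrace \<rho> = 1"
  shows "born_prob Q \<rho> True = (1 + expval Q \<rho>) / 2"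
proof -
  have "meas_proj Q True * \<rho> = (1/2) \<cdot>\<^sub>m (\<rho> + Q * \<rho>)"
    using assms by (auto simp: meas_proj_def mult_smult_assoc_mat[of _ d d] add_mult_distrib_mat[of _ d d]
        intro!: arg_cong2[where f = "(\<cdot>\<^sub>m)"] arg_cong2[where f = "(+)"] eq_matI)
  then show ?thesis
    using assms by (simp add: born_prob_def expval_def mtrace_smult[of _ d] mtrace_add[of _ d])
qed

lemma hermitian_involution_isometry:
  fixes X :: "complex mat" and v :: "nat \<Rightarrow> complex"
  assumes X: "X \<in> carrier_mat d d" and herm: "hermitian X" and inv: "X * X = 1\<^sub>m d"
  shows "(\<Sum>l<d. cnj (\<Sum>j<d. X $$ (l, j) * v j) * (\<Sum>j<d. X $$ (l, j) * v j)) = (\<Sum>i<d. cnj (v i) * v i)"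
proof -
  have X_cnj: "X $$ (i, j) = cnj (X $$ (j, i))" if "i < d" "j < d" for i j
    using herm that carrier_matD(1)[OF X] unfolding hermitian_def by blast
  have X_square: "(\<Sum>l<d. X $$ (i, l) * X $$ (l, j)) = (if i = j then 1 else 0)"
    if "i < d" "j < d" for i j
    using arg_cong[OF inv, of "\<lambda>A. A $$ (i, j)"] X that by (simp add: scalar_prod_def atLeast0LessThan)
  have cnj_Xv: "cnj (\<Sum>j<d. X $$ (l, j) * v j) = (\<Sum>i<d. X $$ (i, l) * cnj (v i))" if "l < d" for l
    unfolding cnj_sum
  proof (intro sum.cong refl)
    fix i assume "i \<in> {..<d}"
    then show "cnj (X $$ (l, i) * v i) = X $$ (i, l) * cnj (v i)"
      using X_cnj[of i l] that by simp
  qed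
  have "(\<Sum>l<d. cnj (\<Sum>j<d. X $$ (l, j) * v j) * (\<Sum>j<d. X $$ (l, j) * v j))
      = (\<Sum>l<d. (\<Sum>i<d. X $$ (i, l) * cnj (v i)) * (\<Sum>j<d. X $$ (l, j) * v j))"
    using cnj_Xv by (intro sum.cong refl) simp
  also have "\<dots> = (\<Sum>l<d. \<Sum>i<d. \<Sum>j<d. cnj (v i) * (X $$ (i, l) * X $$ (l, j)) * v j)"
    by (simp add: sum_product mult_ac) (intro sum.cong refl sum.swap)
  also have "\<dots> = (\<Sum>i<d. \<Sum>l<d. \<Sum>j<d. cnj (v i) * (X $$ (i, l) * X $$ (l, j)) * v j)"
    by (rule sum.swap)
  also have "\<dots> = (\<Sum>i<d. \<Sum>j<d. \<Sum>l<d. cnj (v i) * (X $$ (i, l) * X $$ (l, j)) * v j)"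
    by (intro sum.cong refl sum.swap)
  also have "\<dots> = (\<Sum>i<d. \<Sum>j<d. cnj (v i) * (\<Sum>l<d. X $$ (i, l) * X $$ (l, j)) * v j)"
    by (simp add: sum_distrib_left sum_distrib_right)
  also have "\<dots> = (\<Sum>i<d. \<Sum>j<d. if i = j then cnj (v i) * v i else 0)"
    by (intro sum.cong refl) (simp add: X_square)
  finally show ?thesis
    by simp
qed

lemma hermitian_involution_quadratic_form:
  fixes X :: "complex mat" and v :: "nat \<Rightarrow> complex"
  assumes X: "X \<in> carrier_mat d d" and herm: "hermitian X" and inv: "X * X = 1\<^sub>m d"
  shows "\<bar>Re (\<Sum>i<d. \<Sum>j<d. cnj (v i) * X $$ (i, j) * v j)\<bar> \<le> Re (\<Sum>i<d. cnj (v i) * v i)"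
proof -
  define w where "w l = (\<Sum>j<d. X $$ (l, j) * v j)" for l
  define q where "q = (\<Sum>i<d. \<Sum>j<d. cnj (v i) * X $$ (i, j) * v j)"
  define nv where "nv = (\<Sum>i<d. cnj (v i) * v i)"
  have vw: "(\<Sum>l<d. cnj (v l) * w l) = q"
    unfolding w_def q_def by (simp add: sum_distrib_left mult.assoc)
  have wv: "(\<Sum>l<d. cnj (w l) * v l) = cnj q"
    unfolding vw[symmetric] by (simp add: cnj_sum mult.commute)
  have ww: "(\<Sum>l<d. cnj (w l) * w l) = nv"
    unfolding w_def nv_def by (rule hermitian_involution_isometry[OF X herm inv])
  have "0 \<le> 2 * Re nv + 2 * s * Re q" if "s * s = 1" for s :: real
  proof -
    have "0 \<le> Re (cnj z * z)" for z
      by (simp add: power2_eq_square[symmetric])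
    then have "0 \<le> Re (\<Sum>l<d. cnj (v l + of_real s * w l) * (v l + of_real s * w l))"
      unfolding Re_sum by (intro sum_nonneg)
    also have "(\<Sum>l<d. cnj (v l + of_real s * w l) * (v l + of_real s * w l)) =
        (\<Sum>l<d. cnj (v l) * v l) + of_real s * (\<Sum>l<d. cnj (v l) * w l)
        + of_real s * (\<Sum>l<d. cnj (w l) * v l) + of_real (s * s) * (\<Sum>l<d. cnj (w l) * w l)"
      by (simp add: sum.distrib sum_distrib_left algebra_simps)
    finally show ?thesis
      unfolding vw wv ww that nv_def[symmetric] by simp
  qed
  from this[of 1] this[of "-1"] show ?thesis
    unfolding q_def[symmetric] nv_def[symmetric] by linarith
qed

lemma density_matrix_perturbed_state:
  assumes X: "X \<in> carrier_mat d d" and herm: "hermitian X" and inv: "X * X = 1\<^sub>m d"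
    and tr: "mtrace X = 0" and d: "d > 0" and \<delta>: "\<bar>\<delta>\<bar> \<le> 1"
  shows "density_matrix d (perturbed_state d \<delta> X)"
  unfolding density_matrix_def
proof (intro conjI allI impI)
  fix i j assume "i < d" "j < d"
  moreover have "X $$ (i, j) = cnj (X $$ (j, i))"
    using herm \<open>i < d\<close> \<open>j < d\<close> carrier_matD(1)[OF X] unfolding hermitian_def by blast
  ultimately show "perturbed_state d \<delta> X $$ (i, j) = cnj (perturbed_state d \<delta> X $$ (j, i))"
    using X by (simp add: index_perturbed_state)
next
  fix v :: "nat \<Rightarrow> complex"
  define q where "q = (\<Sum>i<d. \<Sum>j<d. cnj (v i) * X $$ (i, j) * v j)"
  define nv where "nv = (\<Sum>i<d. cnj (v i) * v i)"
  have "(\<Sum>i<d. \<Sum>j<d. cnj (v i) * perturbed_state d \<delta> X $$ (i, j) * v j)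
      = (\<Sum>i<d. \<Sum>j<d. (if i = j then cnj (v i) * v i else 0) / of_nat d
          + of_real \<delta> / of_nat d * (cnj (v i) * X $$ (i, j) * v j))"
    using X by (intro sum.cong refl) (auto simp: index_perturbed_state field_simps)
  also have "\<dots> = (nv + of_real \<delta> * q) / of_nat d"
    unfolding nv_def q_def
    by (simp add: sum.distrib sum_distrib_left sum_divide_distrib[symmetric] add_divide_distrib)
  finally have form: "(\<Sum>i<d. \<Sum>j<d. cnj (v i) * perturbed_state d \<delta> X $$ (i, j) * v j)
      = (nv + of_real \<delta> * q) / of_nat d" .
  have "\<bar>\<delta> * Re q\<bar> \<le> Re nv"
    using hermitian_involution_quadratic_form[OF X herm inv, of v] \<delta>
    unfolding q_def[symmetric] nv_def[symmetric] abs_mult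
    by (meson abs_ge_zero dual_order.trans mult_left_le_one_le)
  then show "0 \<le> Re (\<Sum>i<d. \<Sum>j<d. cnj (v i) * perturbed_state d \<delta> X $$ (i, j) * v j)"
    unfolding form using d by (simp add: Re_divide_of_nat)
qed (use assms in \<open>simp_all add: perturbed_state_carrier_mat mtrace_perturbed_state\<close>)

section \<open>A reflection bijection for walks\<close>

definition walk :: "nat set \<Rightarrow> (nat \<Rightarrow> bool) \<Rightarrow> nat \<Rightarrow> int" where
  "walk P x l = (\<Sum>t\<in>{t\<in>P. t < l}. if x t then 1 else -1)"

lemma finite_bounded_nat: "finite {t\<in>P. t < (l::nat)}"
  by (rule finite_subset[of _ "{..<l}"]) auto

lemma walk_0 [simp]: "walk P x 0 = 0"
  by (simp add: walk_def)

lemma walk_Suc: "walk P x (Suc l) = walk P x l + (if l \<in> P then (if x l then 1 else -1) else 0)"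
proof -
  have "{t\<in>P. t < Suc l} = (if l \<in> P then insert l {t\<in>P. t < l} else {t\<in>P. t < l})"
    by (auto simp: less_Suc_eq)
  then show ?thesis
    by (simp add: walk_def finite_bounded_nat)
qed

lemma walk_fun_upd:
  "walk P (x(j := b)) l
     = walk P x l + (if j \<in> P \<and> j < l then (if b then 1 else -1) - (if x j then 1 else -1) else 0)"
proof (cases "j \<in> P \<and> j < l")
  case True
  then have j: "j \<in> {t\<in>P. t < l}" by simp
  show ?thesis
    using sum.remove[OF finite_bounded_nat j, of "\<lambda>t. if (x(j := b)) t then 1 else (-1::int)"]
      sum.remove[OF finite_bounded_nat j, of "\<lambda>t. if x t then 1 else (-1::int)"] True
    by (simp add: walk_def)
next
  case False
  then have "walk P (x(j := b)) l = walk P x l"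
    unfolding walk_def by (intro sum.cong) auto
  then show ?thesis
    using False by simp
qed

lemma abs_walk_le: "\<bar>walk P x l\<bar> \<le> int l"
proof -
  have "\<bar>walk P x l\<bar> \<le> (\<Sum>t\<in>{t\<in>P. t < l}. \<bar>if x t then 1 else (-1::int)\<bar>)"
    unfolding walk_def by (rule sum_abs)
  also have "\<dots> = (\<Sum>t\<in>{t\<in>P. t < l}. 1)"
    by (intro sum.cong) auto
  also have "\<dots> = int (card {t\<in>P. t < l})"
    by simp
  also have "card {t\<in>P. t < l} \<le> card {..<l}"
    by (rule card_mono) auto
  finally show ?thesis by simp
qed

definition walk_min :: "nat set \<Rightarrow> nat \<Rightarrow> (nat \<Rightarrow> bool) \<Rightarrow> int" where
  "walk_min P T x = Min (walk P x ` {..T})"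

definition last_argmin :: "nat set \<Rightarrow> nat \<Rightarrow> (nat \<Rightarrow> bool) \<Rightarrow> nat" where
  "last_argmin P T x = Max {l. l \<le> T \<and> walk P x l = walk_min P T x}"

definition first_argmin :: "nat set \<Rightarrow> nat \<Rightarrow> (nat \<Rightarrow> bool) \<Rightarrow> nat" where
  "first_argmin P T x = Min {l. l \<le> T \<and> walk P x l = walk_min P T x}"

lemma walk_min_le: "l \<le> T \<Longrightarrow> walk_min P T x \<le> walk P x l"
  unfolding walk_min_def by (rule Min_le) auto

lemma walk_min_nonpos: "walk_min P T x \<le> 0"
  using walk_min_le[of 0 T P x] by simp

lemma walk_min_eqI:
  "(\<And>l. l \<le> T \<Longrightarrow> m \<le> walk P x l) \<Longrightarrow> l\<^sub>0 \<le> T \<Longrightarrow> walk P x l\<^sub>0 = m \<Longrightarrow> walk_min P T x = m"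
  unfolding walk_min_def by (intro antisym Min_le Min.boundedI) auto

lemma argmin_set_nonempty: "{l. l \<le> T \<and> walk P x l = walk_min P T x} \<noteq> {}"
proof -
  have "walk_min P T x \<in> walk P x ` {..T}"
    unfolding walk_min_def by (rule Min_in) auto
  then show ?thesis by auto
qed

lemma last_argmin_in: "last_argmin P T x \<le> T" "walk P x (last_argmin P T x) = walk_min P T x"
  using Max_in[OF _ argmin_set_nonempty[of T P x]] by (auto simp: last_argmin_def)

lemma walk_min_less_after_last_argmin:
  assumes "last_argmin P T x < l" "l \<le> T"
  shows "walk_min P T x < walk P x l"
proof (rule ccontr)
  assume "\<not> walk_min P T x < walk P x l"
  then have "l \<le> last_argmin P T x"
    using walk_min_le[OF assms(2), of P x] assms(2) unfolding last_argmin_def by (intro Max_ge) auto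
  then show False using assms(1) by simp
qed

lemma first_argmin_eqI:
  assumes "l\<^sub>0 \<le> T" "walk P x l\<^sub>0 = walk_min P T x" "\<And>l. l < l\<^sub>0 \<Longrightarrow> walk P x l \<noteq> walk_min P T x"
  shows "first_argmin P T x = l\<^sub>0"
proof -
  have "finite {l. l \<le> T \<and> walk P x l = walk_min P T x}"
    by simp
  then show ?thesis
    unfolding first_argmin_def using assms argmin_set_nonempty[of T P x]
    by (intro antisym Min_le Min.boundedI) (auto simp: not_less[symmetric])
qed

lemma last_argmin_less_iff: "last_argmin P T x < T \<longleftrightarrow> walk_min P T x < walk P x T"
  using walk_min_less_after_last_argmin[where l = T] last_argmin_in[where P = P and T = T and x = x]
  by (cases "last_argmin P T x = T") auto

lemma step_after_last_argmin:
  assumes "last_argmin P T x < T"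
  shows "last_argmin P T x \<in> P" "x (last_argmin P T x)"
proof -
  let ?l = "last_argmin P T x"
  have "walk P x ?l < walk P x (Suc ?l)"
    using walk_min_less_after_last_argmin[where l = "Suc ?l"] last_argmin_in[where P = P and T = T and x = x]
      assms by simp
  then show "?l \<in> P" "x ?l"
    unfolding walk_Suc by (auto split: if_splits)
qed

definition lower_step :: "nat set \<Rightarrow> nat \<Rightarrow> (nat \<Rightarrow> bool) \<Rightarrow> (nat \<Rightarrow> bool)" where
  "lower_step P T x = (if last_argmin P T x < T then x(last_argmin P T x := False) else x)"

definition raise_step :: "nat set \<Rightarrow> nat \<Rightarrow> (nat \<Rightarrow> bool) \<Rightarrow> (nat \<Rightarrow> bool)" where
  "raise_step P T x = (if 0 < first_argmin P T x then x(first_argmin P T x - 1 := True) else x)"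

text \<open>The step flipped by \<^const>\<open>lower_step\<close>, right after the last minimum, becomes the step
  right before the new first minimum, which is why \<^const>\<open>raise_step\<close> undoes it.\<close>

lemma walk_lower_step:
  assumes "walk_min P T x < walk P x T"
  shows "walk P (lower_step P T x) T = walk P x T - 2"
    and "walk_min P T (lower_step P T x) = walk_min P T x - 1"
    and "raise_step P T (lower_step P T x) = x"
proof -
  let ?l = "last_argmin P T x"
  have l: "?l < T" using assms last_argmin_less_iff by blast
  note step = step_after_last_argmin[OF l]
  have lower: "lower_step P T x = x(?l := False)"
    using l by (simp add: lower_step_def)
  have walk_lower: "walk P (lower_step P T x) l = walk P x l - (if ?l < l then 2 else 0)" for l
    unfolding lower walk_fun_upd using step by simp
  have at_l: "walk P x ?l = walk_min P T x"
    by (rule last_argmin_in)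
  have after_l: "walk P x (Suc ?l) = walk_min P T x + 1"
    using step at_l by (simp add: walk_Suc)
  show "walk P (lower_step P T x) T = walk P x T - 2"
    using walk_lower[of T] l by simp
  show min: "walk_min P T (lower_step P T x) = walk_min P T x - 1"
  proof (rule walk_min_eqI)
    fix l assume "l \<le> T"
    then show "walk_min P T x - 1 \<le> walk P (lower_step P T x) l"
      using walk_lower[of l] walk_min_less_after_last_argmin[of P T x l] walk_min_le[of l T P x]
      by (cases "?l < l") auto
  next
    show "Suc ?l \<le> T" "walk P (lower_step P T x) (Suc ?l) = walk_min P T x - 1"
      using l walk_lower[of "Suc ?l"] after_l by auto
  qed
  have "first_argmin P T (lower_step P T x) = Suc ?l"
  proof (rule first_argmin_eqI)
    show "Suc ?l \<le> T" "walk P (lower_step P T x) (Suc ?l) = walk_min P T (lower_step P T x)"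
      using l walk_lower[of "Suc ?l"] after_l min by auto
  next
    fix l assume "l < Suc ?l"
    then show "walk P (lower_step P T x) l \<noteq> walk_min P T (lower_step P T x)"
      using walk_lower[of l] walk_min_le[of l T P x] l min by auto
  qed
  then show "raise_step P T (lower_step P T x) = x"
    using step unfolding raise_step_def lower by (auto simp: fun_eq_iff)
qed

lemma funpow_lower_step:
  assumes "int j \<le> walk P x T - walk_min P T x"
  shows "walk P ((lower_step P T ^^ j) x) T = walk P x T - 2 * int j"
    and "walk_min P T ((lower_step P T ^^ j) x) = walk_min P T x - int j"
    and "(raise_step P T ^^ j) ((lower_step P T ^^ j) x) = x"
proof -
  have "walk P ((lower_step P T ^^ j) x) T = walk P x T - 2 * int j
    \<and> walk_min P T ((lower_step P T ^^ j) x) = walk_min P T x - int j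
    \<and> (raise_step P T ^^ j) ((lower_step P T ^^ j) x) = x"
    using assms
  proof (induction j)
    case (Suc j)
    let ?y = "(lower_step P T ^^ j) x"
    have "walk_min P T ?y < walk P ?y T"
      using Suc by simp
    note lower = walk_lower_step[OF this]
    have "(raise_step P T ^^ Suc j) (lower_step P T ?y)
        = (raise_step P T ^^ j) (raise_step P T (lower_step P T ?y))"
      by (simp add: funpow_Suc_right del: funpow.simps)
    then show ?case
      using Suc lower by simp
  qed simp
  then show "walk P ((lower_step P T ^^ j) x) T = walk P x T - 2 * int j"
    and "walk_min P T ((lower_step P T ^^ j) x) = walk_min P T x - int j"
    and "(raise_step P T ^^ j) ((lower_step P T ^^ j) x) = x"
    by auto
qed

lemma funpow_lower_step_changes:
  "{t. (lower_step P T ^^ j) x t \<noteq> x t} \<subseteq> {t\<in>P. t < T}"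
  "card {t. (lower_step P T ^^ j) x t \<noteq> x t} \<le> j"
proof (induction j)
  case (Suc j)
  let ?y = "(lower_step P T ^^ j) x"
  have step: "{t. lower_step P T ?y t \<noteq> ?y t} \<subseteq> {last_argmin P T ?y} \<inter> {t\<in>P. t < T}"
    using step_after_last_argmin[of P T ?y] by (auto simp: lower_step_def)
  have sub: "{t. (lower_step P T ^^ Suc j) x t \<noteq> x t}
      \<subseteq> {t. lower_step P T ?y t \<noteq> ?y t} \<union> {t. ?y t \<noteq> x t}"
    by auto
  with step Suc.IH(1) show "{t. (lower_step P T ^^ Suc j) x t \<noteq> x t} \<subseteq> {t\<in>P. t < T}"
    by blast
  have "finite {t. ?y t \<noteq> x t}"
    using Suc.IH(1) finite_bounded_nat by (rule finite_subset)
  moreover have "{t. (lower_step P T ^^ Suc j) x t \<noteq> x t} \<subseteq> {last_argmin P T ?y} \<union> {t. ?y t \<noteq> x t}"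
    using sub step by blast
  ultimately have "card {t. (lower_step P T ^^ Suc j) x t \<noteq> x t}
      \<le> card ({last_argmin P T ?y} \<union> {t. ?y t \<noteq> x t})"
    by (intro card_mono) auto
  also have "\<dots> \<le> Suc j"
    using card_Un_le[of "{last_argmin P T ?y}" "{t. ?y t \<noteq> x t}"] Suc.IH(2) by simp
  finally show "card {t. (lower_step P T ^^ Suc j) x t \<noteq> x t} \<le> Suc j" .
qed simp_all

definition outcomes :: "nat \<Rightarrow> (nat \<Rightarrow> bool) set" where
  "outcomes T = {x. \<forall>t\<ge>T. \<not> x t}"

lemma outcomes_eq_PiE_dflt: "outcomes T = PiE_dflt {..<T} False (\<lambda>_. UNIV)"
  by (auto simp: outcomes_def PiE_dflt_def)

lemma finite_outcomes: "finite (outcomes T)"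
  unfolding outcomes_eq_PiE_dflt by (rule finite_PiE_dflt) auto

definition walk_level :: "nat set \<Rightarrow> nat \<Rightarrow> int \<Rightarrow> (nat \<Rightarrow> bool) set" where
  "walk_level P T w = {x \<in> outcomes T. walk P x T = w}"

definition flip_on :: "nat set \<Rightarrow> (nat \<Rightarrow> bool) \<Rightarrow> (nat \<Rightarrow> bool)" where
  "flip_on P x t = (if t \<in> P then \<not> x t else x t)"

lemma walk_flip_on: "walk P (flip_on P x) l = - walk P x l"
  unfolding walk_def sum_negf[symmetric] by (intro sum.cong) (auto simp: flip_on_def)

lemma card_walk_level_uminus:
  assumes "P \<subseteq> {..<T}"
  shows "card (walk_level P T w) = card (walk_level P T (- w))"
proof -
  have "bij_betw (flip_on P) (walk_level P T w) (walk_level P T (- w))"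
    using assms
    by (intro bij_betw_byWitness[where f' = "flip_on P"])
      (auto simp: walk_level_def outcomes_def walk_flip_on flip_on_def fun_eq_iff split: if_splits)
  then show ?thesis
    by (rule bij_betw_same_card)
qed

lemma funpow_lower_step_walk_level:
  assumes "w > 0" "x \<in> walk_level P T w"
  shows "(lower_step P T ^^ nat w) x \<in> walk_level P T (- w)"
proof -
  have "int (nat w) \<le> walk P x T - walk_min P T x"
    using assms walk_min_nonpos[of P T x] by (simp add: walk_level_def)
  then show ?thesis
    using assms funpow_lower_step(1)[where j = "nat w"]
      funpow_lower_step_changes(1)[where j = "nat w" and x = x]
    by (fastforce simp: walk_level_def outcomes_def)
qed

lemma inj_on_funpow_lower_step:
  assumes "w > 0"
  shows "inj_on (lower_step P T ^^ nat w) (walk_level P T w)"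
proof (rule inj_on_inverseI)
  fix x assume "x \<in> walk_level P T w"
  then have "int (nat w) \<le> walk P x T - walk_min P T x"
    using assms walk_min_nonpos[of P T x] by (simp add: walk_level_def)
  then show "(raise_step P T ^^ nat w) ((lower_step P T ^^ nat w) x) = x"
    by (rule funpow_lower_step(3))
qed

lemma bij_betw_funpow_lower_step:
  assumes "P \<subseteq> {..<T}" "w > 0"
  shows "bij_betw (lower_step P T ^^ nat w) (walk_level P T w) (walk_level P T (- w))"
proof -
  have "(lower_step P T ^^ nat w) ` walk_level P T w \<subseteq> walk_level P T (- w)"
    using funpow_lower_step_walk_level[OF assms(2)] by blast
  moreover have "card ((lower_step P T ^^ nat w) ` walk_level P T w) = card (walk_level P T (- w))"
    using card_image[OF inj_on_funpow_lower_step[OF assms(2)]] card_walk_level_uminus[OF assms(1)]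
    by simp
  ultimately have "(lower_step P T ^^ nat w) ` walk_level P T w = walk_level P T (- w)"
    by (intro card_subset_eq) (auto simp: walk_level_def finite_outcomes)
  then show ?thesis
    using inj_on_funpow_lower_step[OF assms(2)] by (simp add: bij_betw_def)
qed

section \<open>Products of Bernoulli distributions\<close>

definition bernoulli_vec :: "nat \<Rightarrow> (nat \<Rightarrow> real) \<Rightarrow> (nat \<Rightarrow> bool) pmf" where
  "bernoulli_vec T \<beta> = Pi_pmf {..<T} False (\<lambda>t. bernoulli_pmf (\<beta> t))"

lemma set_pmf_bernoulli_vec: "set_pmf (bernoulli_vec T \<beta>) \<subseteq> outcomes T"
  unfolding bernoulli_vec_def outcomes_def
  using set_Pi_pmf_subset[of "{..<T}" False "\<lambda>t. bernoulli_pmf (\<beta> t)"] by (auto simp: not_less)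

lemma prob_bernoulli_vec:
  "measure_pmf.prob (bernoulli_vec T \<beta>) Y = (\<Sum>x\<in>Y \<inter> outcomes T. pmf (bernoulli_vec T \<beta>) x)"
proof -
  have "measure_pmf.prob (bernoulli_vec T \<beta>) Y = measure_pmf.prob (bernoulli_vec T \<beta>) (Y \<inter> outcomes T)"
    using set_pmf_bernoulli_vec
    by (intro measure_eq_AE AE_pmfI) auto
  also have "\<dots> = (\<Sum>x\<in>Y \<inter> outcomes T. pmf (bernoulli_vec T \<beta>) x)"
    using finite_outcomes by (intro measure_measure_pmf_finite) auto
  finally show ?thesis .
qed

lemma pmf_bernoulli_vec:
  assumes "\<And>t. 0 \<le> \<beta> t \<and> \<beta> t \<le> 1" and "x \<in> outcomes T"
  shows "pmf (bernoulli_vec T \<beta>) x = (\<Prod>t<T. if x t then \<beta> t else 1 - \<beta> t)"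
  unfolding bernoulli_vec_def using assms
  by (subst pmf_Pi') (auto simp: outcomes_def pmf_bernoulli_True pmf_bernoulli_False intro!: prod.cong)

definition biased_on :: "nat set \<Rightarrow> real \<Rightarrow> nat \<Rightarrow> real" where
  "biased_on P a t = (if t \<in> P then a else 1/2)"

lemma biased_on_range: "0 \<le> a \<Longrightarrow> a \<le> 1 \<Longrightarrow> 0 \<le> biased_on P a t \<and> biased_on P a t \<le> 1"
  by (simp add: biased_on_def)

lemma pmf_bernoulli_vec_biased_on:
  assumes P: "P \<subseteq> {..<T}" and a: "0 \<le> a" "a \<le> 1" and x: "x \<in> outcomes T"
  shows "pmf (bernoulli_vec T (biased_on P a)) x
    = a ^ card {t\<in>P. x t} * (1 - a) ^ card {t\<in>P. \<not> x t} * (1/2) ^ (T - card P)"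
proof -
  have fin: "finite P" using P finite_subset by blast
  have "pmf (bernoulli_vec T (biased_on P a)) x
      = (\<Prod>t<T. if x t then biased_on P a t else 1 - biased_on P a t)"
    by (rule pmf_bernoulli_vec[OF biased_on_range[OF a] x])
  also have "\<dots> = (\<Prod>t\<in>{..<T} - P. 1/2) * (\<Prod>t\<in>P. if x t then a else 1 - a)"
    unfolding prod.subset_diff[OF P finite_lessThan]
    by (intro arg_cong2[where f = "(*)"] prod.cong) (auto simp: biased_on_def)
  also have "\<dots> = a ^ card {t\<in>P. x t} * (1 - a) ^ card {t\<in>P. \<not> x t} * (1/2) ^ (T - card P)"
    using P fin by (simp add: prod.If_cases[OF fin] card_Diff_subset Int_def)
  finally show ?thesis .
qed

lemma walk_eq_card:
  assumes "P \<subseteq> {..<T}"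
  shows "walk P x T = int (card {t\<in>P. x t}) - int (card {t\<in>P. \<not> x t})"
proof -
  have "finite P" "{t\<in>P. t < T} = P"
    using assms finite_subset by auto
  then show ?thesis
    by (simp add: walk_def sum.If_cases Int_def)
qed

lemma pmf_bernoulli_vec_biased_on_swap:
  assumes P: "P \<subseteq> {..<T}" and a: "0 \<le> a" "a \<le> 1" and xy: "x \<in> outcomes T" "y \<in> outcomes T"
    and walk: "walk P y T = - walk P x T"
  shows "pmf (bernoulli_vec T (biased_on P a)) y = pmf (bernoulli_vec T (biased_on P (1 - a))) x"
proof -
  have "finite P"
    using P finite_subset by blast
  then have split: "card {t\<in>P. z t} + card {t\<in>P. \<not> z t} = card P" for z
    by (subst card_Un_disjoint[symmetric]) (auto intro: arg_cong[where f = card])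
  then have "card {t\<in>P. y t} = card {t\<in>P. \<not> x t}" "card {t\<in>P. \<not> y t} = card {t\<in>P. x t}"
    using walk walk_eq_card[OF P, of x] walk_eq_card[OF P, of y] split[of x] split[of y] by linarith+
  then show ?thesis
    using a xy by (simp add: pmf_bernoulli_vec_biased_on[OF P])
qed

definition reflect_corruption :: "nat set \<Rightarrow> nat \<Rightarrow> real \<Rightarrow> (nat \<Rightarrow> bool) \<Rightarrow> (nat \<Rightarrow> bool)" where
  "reflect_corruption P T B x =
     (if 0 < walk P x T \<and> real_of_int (walk P x T) \<le> B then (lower_step P T ^^ nat (walk P x T)) x else x)"

lemma reflect_corruption_changes:
  assumes "0 \<le> B"
  shows "{t. reflect_corruption P T B x t \<noteq> x t} \<subseteq> {..<T}
    \<and> real (card {t. reflect_corruption P T B x t \<noteq> x t}) \<le> B"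
proof (cases "0 < walk P x T \<and> real_of_int (walk P x T) \<le> B")
  case True
  let ?y = "(lower_step P T ^^ nat (walk P x T)) x"
  have "real (card {t. ?y t \<noteq> x t}) \<le> real (nat (walk P x T))"
    using funpow_lower_step_changes(2)[where P = P and T = T and j = "nat (walk P x T)" and x = x]
    by (simp only: of_nat_le_iff)
  also have "\<dots> \<le> B"
    using True by simp
  finally show ?thesis
    using True funpow_lower_step_changes(1)[where P = P and T = T and j = "nat (walk P x T)" and x = x]
    by (auto simp: reflect_corruption_def)
next
  case False
  then have "reflect_corruption P T B x = x"
    unfolding reflect_corruption_def by (rule if_not_P)
  then show ?thesis
    using assms by simp
qed

lemma bij_betw_Int_vimage: "bij_betw f A B \<Longrightarrow> bij_betw f (A \<inter> f -` C) (B \<inter> C)"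
  unfolding bij_betw_def by (auto intro: inj_on_subset)

text \<open>A point of level \<open>w\<close> has the same weight under bias \<open>a\<close> as a point of level \<open>-w\<close> under
  bias \<open>1 - a\<close>, and for \<open>0 < w \<le> B\<close> the corruption maps level \<open>w\<close> bijectively onto level \<open>-w\<close>
  while fixing level \<open>-w\<close>.\<close>

lemma sum_pmf_reflect_corruption_level_pos:
  fixes B :: real and Y :: "(nat \<Rightarrow> bool) set"
  assumes P: "P \<subseteq> {..<T}" and a: "0 \<le> a" "a \<le> 1" and v: "v > 0"
  defines "S w \<equiv> {x \<in> walk_level P T w. \<bar>real_of_int w\<bar> \<le> B \<and> reflect_corruption P T B x \<in> Y}"
  shows "sum (pmf (bernoulli_vec T (biased_on P a))) (S v)
       = sum (pmf (bernoulli_vec T (biased_on P (1 - a)))) (S (- v))"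
proof (cases "real_of_int v \<le> B")
  case True
  let ?\<sigma> = "lower_step P T ^^ nat v"
  have "S v = walk_level P T v \<inter> ?\<sigma> -` Y" "S (- v) = walk_level P T (- v) \<inter> Y"
    using True v by (auto simp: S_def walk_level_def reflect_corruption_def)
  then have bij: "bij_betw ?\<sigma> (S v) (S (- v))"
    using bij_betw_Int_vimage[OF bij_betw_funpow_lower_step[OF P v]] by simp
  have "pmf (bernoulli_vec T (biased_on P (1 - a))) (?\<sigma> x) = pmf (bernoulli_vec T (biased_on P a)) x"
    if "x \<in> S v" for x
    using pmf_bernoulli_vec_biased_on_swap[OF P, of "1 - a" x "?\<sigma> x"] a that bij_betw_apply[OF bij that]
    by (simp add: S_def walk_level_def)
  then show ?thesis
    by (simp add: sum.reindex_bij_betw[OF bij, symmetric] cong: sum.cong)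
next
  case False
  then show ?thesis
    using v by (simp add: S_def)
qed

lemma sum_pmf_reflect_corruption_level:
  fixes B :: real and Y :: "(nat \<Rightarrow> bool) set"
  assumes P: "P \<subseteq> {..<T}" and a: "0 \<le> a" "a \<le> 1"
  defines "S w \<equiv> {x \<in> walk_level P T w. \<bar>real_of_int w\<bar> \<le> B \<and> reflect_corruption P T B x \<in> Y}"
  shows "sum (pmf (bernoulli_vec T (biased_on P a))) (S w)
       = sum (pmf (bernoulli_vec T (biased_on P (1 - a)))) (S (- w))"
proof (cases w "0 :: int" rule: linorder_cases)
  case less
  have "0 \<le> 1 - a" "1 - a \<le> 1"
    using a by auto
  then show ?thesis
    using sum_pmf_reflect_corruption_level_pos[OF P _ _, of "1 - a" "- w" B Y] less
    by (simp add: S_def)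
next
  case equal
  have "pmf (bernoulli_vec T (biased_on P a)) x = pmf (bernoulli_vec T (biased_on P (1 - a))) x"
    if "x \<in> S 0" for x
    using pmf_bernoulli_vec_biased_on_swap[OF P a, of x x] that by (simp add: S_def walk_level_def)
  then show ?thesis
    using equal by (simp cong: sum.cong)
next
  case greater
  then show ?thesis
    using sum_pmf_reflect_corruption_level_pos[OF P a greater, of B Y] by (simp add: S_def)
qed

lemma sum_pmf_reflect_corruption:
  fixes B :: real and Y :: "(nat \<Rightarrow> bool) set"
  assumes P: "P \<subseteq> {..<T}" and a: "0 \<le> a" "a \<le> 1"
  defines "S \<equiv> {x \<in> outcomes T. \<bar>real_of_int (walk P x T)\<bar> \<le> B \<and> reflect_corruption P T B x \<in> Y}"
  shows "sum (pmf (bernoulli_vec T (biased_on P a))) S = sum (pmf (bernoulli_vec T (biased_on P (1 - a)))) S"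
proof -
  let ?p = "pmf (bernoulli_vec T (biased_on P a))" and ?q = "pmf (bernoulli_vec T (biased_on P (1 - a)))"
  have fin: "finite S"
    using finite_outcomes by (auto simp: S_def)
  have levels: "(\<lambda>x. walk P x T) ` S \<subseteq> {- int T..int T}"
  proof (rule image_subsetI)
    fix x
    show "walk P x T \<in> {- int T..int T}"
      using abs_walk_le[of P x T] unfolding atLeastAtMost_iff abs_le_iff by linarith
  qed
  have level: "{x \<in> S. walk P x T = v}
      = {x \<in> walk_level P T v. \<bar>real_of_int v\<bar> \<le> B \<and> reflect_corruption P T B x \<in> Y}" for v
    by (auto simp: S_def walk_level_def)
  have "sum ?p S = (\<Sum>v\<in>{- int T..int T}. sum ?p {x \<in> S. walk P x T = v})"
    by (rule sum.group[OF fin _ levels, symmetric]) simp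
  also have "\<dots> = (\<Sum>v\<in>{- int T..int T}. sum ?q {x \<in> S. walk P x T = - v})"
    unfolding level using sum_pmf_reflect_corruption_level[OF P a] by simp
  also have "\<dots> = (\<Sum>v\<in>{- int T..int T}. sum ?q {x \<in> S. walk P x T = v})"
    by (rule sum.reindex_bij_witness[where i = uminus and j = uminus]) auto
  also have "\<dots> = sum ?q S"
    by (rule sum.group[OF fin _ levels]) simp
  finally show ?thesis .
qed

lemma prob_reflect_corruption_diff_le:
  assumes P: "P \<subseteq> {..<T}" and a: "0 \<le> a" "a \<le> 1"
  shows "measure_pmf.prob (bernoulli_vec T (biased_on P a)) (reflect_corruption P T B -` Y)
       - measure_pmf.prob (bernoulli_vec T (biased_on P (1 - a))) (reflect_corruption P T B -` Y)
     \<le> measure_pmf.prob (bernoulli_vec T (biased_on P a)) {x. B < \<bar>real_of_int (walk P x T)\<bar>}"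
proof -
  define p where "p = pmf (bernoulli_vec T (biased_on P a))"
  define q where "q = pmf (bernoulli_vec T (biased_on P (1 - a)))"
  define S where "S = {x \<in> outcomes T. \<bar>real_of_int (walk P x T)\<bar> \<le> B \<and> reflect_corruption P T B x \<in> Y}"
  define R where "R = {x \<in> outcomes T. B < \<bar>real_of_int (walk P x T)\<bar> \<and> reflect_corruption P T B x \<in> Y}"
  have fin: "finite S" "finite R"
    using finite_outcomes by (auto simp: S_def R_def)
  have split: "reflect_corruption P T B -` Y \<inter> outcomes T = S \<union> R" "S \<inter> R = {}"
    by (auto simp: S_def R_def)
  have "measure_pmf.prob (bernoulli_vec T (biased_on P a)) (reflect_corruption P T B -` Y)
      = sum p S + sum p R"
    unfolding prob_bernoulli_vec p_def split by (rule sum.union_disjoint[OF fin split(2)])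
  moreover have "measure_pmf.prob (bernoulli_vec T (biased_on P (1 - a))) (reflect_corruption P T B -` Y)
      = sum q S + sum q R"
    unfolding prob_bernoulli_vec q_def split by (rule sum.union_disjoint[OF fin split(2)])
  moreover have "sum p R
      \<le> measure_pmf.prob (bernoulli_vec T (biased_on P a)) {x. B < \<bar>real_of_int (walk P x T)\<bar>}"
    unfolding prob_bernoulli_vec p_def using finite_outcomes
    by (intro sum_mono2) (auto simp: R_def)
  moreover have "0 \<le> sum q R"
    by (simp add: q_def sum_nonneg)
  ultimately show ?thesis
    using sum_pmf_reflect_corruption[OF P a, of B Y] by (simp add: p_def q_def S_def)
qed

section \<open>Moment bounds for biased coins\<close>

lemma integrable_bernoulli_vec [simp]:
  "integrable (measure_pmf (bernoulli_vec T \<beta>)) (f :: _ \<Rightarrow> real)"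
  using finite_outcomes set_pmf_bernoulli_vec
  by (intro integrable_measure_pmf_finite) (rule finite_subset)

lemma expectation_bernoulli_vec:
  "measure_pmf.expectation (bernoulli_vec T \<beta>) f = (\<Sum>x\<in>outcomes T. f x * pmf (bernoulli_vec T \<beta>) x)"
  using set_pmf_bernoulli_vec by (intro integral_measure_pmf_real[OF finite_outcomes]) auto

lemma expectation_prod_bernoulli_vec:
  fixes f :: "nat \<Rightarrow> bool \<Rightarrow> real"
  assumes "\<And>t b. 0 \<le> f t b" and "\<And>t. 0 \<le> \<beta> t \<and> \<beta> t \<le> 1"
  shows "measure_pmf.expectation (bernoulli_vec T \<beta>) (\<lambda>x. \<Prod>t<T. f t (x t))
    = (\<Prod>t<T. f t True * \<beta> t + f t False * (1 - \<beta> t))"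
proof -
  have "measure_pmf.expectation (bernoulli_vec T \<beta>) (\<lambda>x. \<Prod>t<T. f t (x t))
      = (\<Prod>t<T. measure_pmf.expectation (bernoulli_pmf (\<beta> t)) (f t))"
    unfolding bernoulli_vec_def
    by (rule expectation_prod_Pi_pmf) (use assms in \<open>auto intro: integrable_measure_pmf_finite\<close>)
  also have "\<dots> = (\<Prod>t<T. f t True * \<beta> t + f t False * (1 - \<beta> t))"
    using assms(2) by (intro prod.cong) auto
  finally show ?thesis .
qed

lemma expectation_prod_bernoulli_vec_subset:
  assumes C: "C \<subseteq> {..<T}" and \<beta>: "\<And>t. 0 \<le> \<beta> t \<and> \<beta> t \<le> 1"
  shows "measure_pmf.expectation (bernoulli_vec T \<beta>) (\<lambda>x. \<Prod>t\<in>C. of_bool (x t)) = (\<Prod>t\<in>C. \<beta> t)"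
proof -
  have prod_C: "(\<Prod>t<T. if t \<in> C then g t else 1) = (\<Prod>t\<in>C. g t)" for g :: "nat \<Rightarrow> real"
    using C by (simp add: prod.If_cases Int_absorb1)
  have "measure_pmf.expectation (bernoulli_vec T \<beta>) (\<lambda>x. \<Prod>t\<in>C. of_bool (x t))
      = measure_pmf.expectation (bernoulli_vec T \<beta>) (\<lambda>x. \<Prod>t<T. if t \<in> C then of_bool (x t) else 1 :: real)"
    by (simp only: prod_C)
  also have "\<dots> = (\<Prod>t<T. (if t \<in> C then of_bool True else 1) * \<beta> t
      + (if t \<in> C then of_bool False else 1) * (1 - \<beta> t))"
    by (rule expectation_prod_bernoulli_vec[where f = "\<lambda>t b. if t \<in> C then of_bool b else 1"])
      (use \<beta> in auto)
  also have "\<dots> = (\<Prod>t<T. if t \<in> C then \<beta> t else 1)"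
    by (intro prod.cong) auto
  finally show ?thesis
    by (simp only: prod_C)
qed

lemma walk_eq_sum:
  assumes "P \<subseteq> {..<T}"
  shows "real_of_int (walk P x T) = (\<Sum>t\<in>P. 2 * of_bool (x t) - 1)"
proof -
  have "{t\<in>P. t < T} = P"
    using assms by auto
  then show ?thesis
    by (simp add: walk_def of_int_sum) (rule sum.cong, auto)
qed

lemma expectation_spin_product:
  assumes P: "P \<subseteq> {..<T}" and a: "0 \<le> a" "a \<le> 1" and tu: "t \<in> P" "u \<in> P"
  shows "measure_pmf.expectation (bernoulli_vec T (biased_on P a))
      (\<lambda>x. (2 * of_bool (x t) - 1) * (2 * of_bool (x u) - 1))
    = (if t = u then 1 else (2 * a - 1)\<^sup>2)"
proof (cases "t = u")
  case True
  then have "(\<lambda>x. (2 * of_bool (x t) - 1) * (2 * of_bool (x u) - 1)) = (\<lambda>x. 1 :: real)"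
    by (auto simp: of_bool_def)
  then show ?thesis
    using True by simp
next
  case False
  let ?E = "measure_pmf.expectation (bernoulli_vec T (biased_on P a))"
  note \<beta> = biased_on_range[OF a]
  have E1: "?E (\<lambda>x. of_bool (x v)) = a" if "v \<in> P" for v
    using expectation_prod_bernoulli_vec_subset[of "{v}" T "biased_on P a", OF _ \<beta>] that P
    by (auto simp: biased_on_def)
  have E2: "?E (\<lambda>x. of_bool (x t) * of_bool (x u)) = a * a"
    using expectation_prod_bernoulli_vec_subset[of "{t, u}" T "biased_on P a", OF _ \<beta>] tu P False
    by (auto simp: biased_on_def)
  have "(\<lambda>x. (2 * of_bool (x t) - 1) * (2 * of_bool (x u) - 1))
      = (\<lambda>x. 4 * (of_bool (x t) * of_bool (x u)) - 2 * of_bool (x t) - 2 * of_bool (x u) + (1 :: real))"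
    by (rule ext) (simp add: algebra_simps)
  then have "?E (\<lambda>x. (2 * of_bool (x t) - 1) * (2 * of_bool (x u) - 1) :: real)
      = 4 * ?E (\<lambda>x. of_bool (x t) * of_bool (x u)) - 2 * ?E (\<lambda>x. of_bool (x t))
        - 2 * ?E (\<lambda>x. of_bool (x u)) + 1"
    by simp
  also have "\<dots> = (2 * a - 1)\<^sup>2"
    using E1 E2 tu by (simp add: power2_eq_square algebra_simps)
  finally show ?thesis
    using False by simp
qed

lemma expectation_walk_square_le:
  assumes P: "P \<subseteq> {..<T}" and a: "0 \<le> a" "a \<le> 1"
  shows "measure_pmf.expectation (bernoulli_vec T (biased_on P a)) (\<lambda>x. (real_of_int (walk P x T))\<^sup>2)
     \<le> real (card P) + (real (card P))\<^sup>2 * (2 * a - 1)\<^sup>2"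
proof -
  let ?E = "measure_pmf.expectation (bernoulli_vec T (biased_on P a))"
  let ?c = "(2 * a - 1)\<^sup>2"
  have fin: "finite P"
    using P finite_subset by blast
  have "?E (\<lambda>x. (real_of_int (walk P x T))\<^sup>2)
      = (\<Sum>t\<in>P. \<Sum>u\<in>P. ?E (\<lambda>x. (2 * of_bool (x t) - 1) * (2 * of_bool (x u) - 1)))"
    by (simp add: walk_eq_sum[OF P] power2_eq_square sum_product Bochner_Integration.integral_sum)
  also have "\<dots> = (\<Sum>t\<in>P. \<Sum>u\<in>P. ?c + (if t = u then 1 - ?c else 0))"
    using expectation_spin_product[OF P a] by (intro sum.cong refl) auto
  also have "\<dots> = real (card P) * (real (card P) * ?c) + real (card P) * (1 - ?c)"
    using fin by (simp add: sum.distrib distrib_left)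
  also have "\<dots> = real (card P) + (real (card P))\<^sup>2 * ?c - real (card P) * ?c"
    by (simp add: power2_eq_square[of "real (card P)"] algebra_simps)
  also have "\<dots> \<le> real (card P) + (real (card P))\<^sup>2 * ?c"
    by simp
  finally show ?thesis .
qed

lemma prob_abs_walk_gt_le:
  assumes P: "P \<subseteq> {..<T}" and a: "0 \<le> a" "a \<le> 1" and B: "B > 0"
  shows "measure_pmf.prob (bernoulli_vec T (biased_on P a)) {x. B < \<bar>real_of_int (walk P x T)\<bar>}
     \<le> (real (card P) + (real (card P))\<^sup>2 * (2 * a - 1)\<^sup>2) / B\<^sup>2"
proof -
  let ?M = "bernoulli_vec T (biased_on P a)"
  have "measure_pmf.prob ?M {x. B < \<bar>real_of_int (walk P x T)\<bar>}
      \<le> measure_pmf.prob ?M {x \<in> space ?M. B \<le> \<bar>real_of_int (walk P x T)\<bar>}"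
    by (intro measure_pmf.finite_measure_mono) auto
  also have "\<dots> \<le> measure_pmf.expectation ?M (\<lambda>x. (real_of_int (walk P x T))\<^sup>2) / B\<^sup>2"
    using B by (intro measure_pmf.second_moment_method) auto
  also have "\<dots> \<le> (real (card P) + (real (card P))\<^sup>2 * (2 * a - 1)\<^sup>2) / B\<^sup>2"
    using expectation_walk_square_le[OF P a] by (simp add: divide_right_mono)
  finally show ?thesis .
qed

definition likelihood_ratio :: "nat set \<Rightarrow> real \<Rightarrow> nat \<Rightarrow> (nat \<Rightarrow> bool) \<Rightarrow> real" where
  "likelihood_ratio P a T x = (\<Prod>t<T. if t \<in> P then 2 * (if x t then a else 1 - a) else 1)"

lemma pmf_biased_on_eq_likelihood_ratio:
  assumes a: "0 \<le> a" "a \<le> 1" and x: "x \<in> outcomes T"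
  shows "pmf (bernoulli_vec T (biased_on P a)) x
    = pmf (bernoulli_vec T (\<lambda>_. 1/2)) x * likelihood_ratio P a T x"
proof -
  have "pmf (bernoulli_vec T (biased_on P a)) x
      = (\<Prod>t<T. (1/2) * (if t \<in> P then 2 * (if x t then a else 1 - a) else 1))"
    using pmf_bernoulli_vec[where \<beta> = "biased_on P a", OF biased_on_range[OF a] x]
    by (auto simp: biased_on_def intro!: prod.cong)
  also have "\<dots> = pmf (bernoulli_vec T (\<lambda>_. 1/2)) x * likelihood_ratio P a T x"
    using pmf_bernoulli_vec[of "\<lambda>_. 1/2" x T] x
    by (simp add: likelihood_ratio_def prod_dividef power_one_over cong: if_cong)
  finally show ?thesis .
qed

lemma expectation_likelihood_ratio_square:
  assumes "P \<subseteq> {..<T}"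
  shows "measure_pmf.expectation (bernoulli_vec T (\<lambda>_. 1/2)) (\<lambda>x. (likelihood_ratio P a T x)\<^sup>2)
    = (1 + (2 * a - 1)\<^sup>2) ^ card P"
proof -
  let ?l = "\<lambda>t b. if t \<in> P then 2 * (if b then a else 1 - a) else 1"
  have "measure_pmf.expectation (bernoulli_vec T (\<lambda>_. 1/2)) (\<lambda>x. (likelihood_ratio P a T x)\<^sup>2)
      = measure_pmf.expectation (bernoulli_vec T (\<lambda>_. 1/2)) (\<lambda>x. \<Prod>t<T. (?l t (x t))\<^sup>2)"
    by (simp add: likelihood_ratio_def prod_power_distrib)
  also have "\<dots> = (\<Prod>t<T. (?l t True)\<^sup>2 * (1/2) + (?l t False)\<^sup>2 * (1 - 1/2))"
    by (rule expectation_prod_bernoulli_vec) simp_all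
  also have "\<dots> = (\<Prod>t<T. if t \<in> P then 1 + (2 * a - 1)\<^sup>2 else 1)"
    by (intro prod.cong) (simp_all add: power2_eq_square field_simps)
  also have "\<dots> = (1 + (2 * a - 1)\<^sup>2) ^ card P"
    using assms by (simp add: prod.If_cases Int_absorb1)
  finally show ?thesis .
qed

text \<open>With \<open>L\<close> the likelihood ratio and \<open>E\<close> the expectation under fair coins,
  \<open>P\<^sub>a(Y) - P\<^sub>1\<^sub>/\<^sub>2(Y) = E[(L - 1) 1\<^sub>Y] \<le> E[(L - 1)\<^sup>2] / (2c) + c / 2\<close>, and the
  \<open>\<chi>\<^sup>2\<close>-divergence \<open>E[(L - 1)\<^sup>2] = E[L\<^sup>2] - 1\<close> of a product of coins is \<open>(1 + (2a - 1)\<^sup>2)\<^bsup>|P|\<^esup> - 1\<close>.\<close>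

lemma prob_biased_on_diff_fair_le:
  assumes P: "P \<subseteq> {..<T}" and a: "0 \<le> a" "a \<le> 1" and c: "c > 0"
  shows "measure_pmf.prob (bernoulli_vec T (biased_on P a)) Y - measure_pmf.prob (bernoulli_vec T (\<lambda>_. 1/2)) Y
     \<le> ((1 + (2 * a - 1)\<^sup>2) ^ card P - 1) / (2 * c) + c / 2"
proof -
  define p0 where "p0 = pmf (bernoulli_vec T (\<lambda>_. 1/2))"
  define L where "L = likelihood_ratio P a T"
  have p0_nonneg: "0 \<le> p0 x" for x
    by (simp add: p0_def)
  have ratio: "pmf (bernoulli_vec T (biased_on P a)) x = p0 x * L x" if "x \<in> outcomes T" for x
    unfolding p0_def L_def by (rule pmf_biased_on_eq_likelihood_ratio[OF a that])
  have sum0: "(\<Sum>x\<in>outcomes T. p0 x) = 1"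
    unfolding p0_def by (rule sum_pmf_eq_1[OF finite_outcomes set_pmf_bernoulli_vec])
  have sum1: "(\<Sum>x\<in>outcomes T. p0 x * L x) = 1"
    using sum_pmf_eq_1[OF finite_outcomes set_pmf_bernoulli_vec, of T "biased_on P a"] ratio by simp
  have sum2: "(\<Sum>x\<in>outcomes T. p0 x * (L x)\<^sup>2) = (1 + (2 * a - 1)\<^sup>2) ^ card P"
    using expectation_likelihood_ratio_square[OF P, of a]
    by (simp add: expectation_bernoulli_vec p0_def L_def mult.commute)
  have young: "y \<le> y\<^sup>2 / (2 * c) + c / 2" for y
  proof -
    have "0 \<le> (y - c)\<^sup>2"
      by simp
    then have "2 * c * y \<le> y\<^sup>2 + c\<^sup>2"
      by (simp add: power2_eq_square algebra_simps)
    then show ?thesis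
      using c by (simp add: field_simps power2_eq_square)
  qed
  have "measure_pmf.prob (bernoulli_vec T (biased_on P a)) Y - measure_pmf.prob (bernoulli_vec T (\<lambda>_. 1/2)) Y
      = (\<Sum>x\<in>Y \<inter> outcomes T. p0 x * (L x - 1))"
    unfolding prob_bernoulli_vec p0_def[symmetric]
    by (simp add: sum_subtractf[symmetric] ratio algebra_simps)
  also have "\<dots> \<le> (\<Sum>x\<in>Y \<inter> outcomes T. p0 x * ((L x - 1)\<^sup>2 / (2 * c) + c / 2))"
    by (intro sum_mono mult_left_mono young p0_nonneg)
  also have "\<dots> \<le> (\<Sum>x\<in>outcomes T. p0 x * ((L x - 1)\<^sup>2 / (2 * c) + c / 2))"
    using c p0_nonneg by (intro sum_mono2 finite_outcomes) auto
  also have "\<dots> = ((\<Sum>x\<in>outcomes T. p0 x * (L x)\<^sup>2) - 2 * (\<Sum>x\<in>outcomes T. p0 x * L x)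
      + (\<Sum>x\<in>outcomes T. p0 x)) / (2 * c) + c / 2 * (\<Sum>x\<in>outcomes T. p0 x)"
    by (simp add: sum_distrib_left sum_divide_distrib sum.distrib sum_subtractf power2_eq_square
        algebra_simps diff_divide_distrib add_divide_distrib)
  also have "\<dots> = ((1 + (2 * a - 1)\<^sup>2) ^ card P - 1) / (2 * c) + c / 2"
    unfolding sum0 sum1 sum2 by simp
  finally show ?thesis .
qed

section \<open>Two-point lower bounds for non-adaptive algorithms\<close>

lemma integrable_measure_pmf_bounded:
  "(\<And>x. \<bar>f x\<bar> \<le> (C::real)) \<Longrightarrow> integrable (measure_pmf M) f"
  by (rule measure_pmf.integrable_const_bound[where B = C]) auto

lemma prob_bind_pmf:
  "measure_pmf.prob (bind_pmf M N) X = measure_pmf.expectation M (\<lambda>x. measure_pmf.prob (N x) X)"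
proof -
  have "ennreal (measure_pmf.prob (bind_pmf M N) X) = emeasure (measure_pmf (bind_pmf M N)) X"
    by (simp add: measure_pmf.emeasure_eq_measure)
  also have "\<dots> = (\<integral>\<^sup>+x. emeasure (measure_pmf (N x)) X \<partial>M)"
    by simp
  also have "\<dots> = (\<integral>\<^sup>+x. ennreal (measure_pmf.prob (N x) X) \<partial>M)"
    by (simp add: measure_pmf.emeasure_eq_measure)
  also have "\<dots> = ennreal (measure_pmf.expectation M (\<lambda>x. measure_pmf.prob (N x) X))"
    by (intro nn_integral_eq_integral integrable_measure_pmf_bounded[where C = 1]) auto
  finally show ?thesis
    by simp
qed

lemma prob_estimates_dist:
  "measure_pmf.prob (estimates_dist ps T A \<rho> adv) S
     = measure_pmf.expectation A
         (\<lambda>(s, e). measure_pmf.prob (outcome_dist ps T s \<rho>) (adv s -` e -` S))"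
proof -
  have "(\<lambda>x. e (adv s x)) -` S = adv s -` e -` S" for s e
    by auto
  then show ?thesis
    unfolding estimates_dist_def prob_bind_pmf
    by (intro Bochner_Integration.integral_cong) (auto simp: measure_map_pmf)
qed

lemma prob_estimates_dist_diff_le:
  fixes A :: nonadaptive_alg and g :: "(nat \<Rightarrow> nat) \<Rightarrow> real"
  assumes sep: "\<And>s e Y. (s, e) \<in> set_pmf A \<Longrightarrow>
      measure_pmf.prob (outcome_dist ps T s \<rho>\<^sub>a) (adv\<^sub>a s -` Y)
      - measure_pmf.prob (outcome_dist ps T s \<rho>\<^sub>b) (adv\<^sub>b s -` Y) \<le> g s"
    and g_bounded: "\<And>s. \<bar>g s\<bar> \<le> C"
  shows "measure_pmf.prob (estimates_dist ps T A \<rho>\<^sub>a adv\<^sub>a) S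
      - measure_pmf.prob (estimates_dist ps T A \<rho>\<^sub>b adv\<^sub>b) S
    \<le> measure_pmf.expectation A (\<lambda>(s, e). g s)"
proof -
  define F where "F \<rho> adv = (\<lambda>(s, e :: (nat \<Rightarrow> bool) \<Rightarrow> nat \<Rightarrow> real).
      measure_pmf.prob (outcome_dist ps T s \<rho>) (adv s -` e -` S))"
    for \<rho> and adv :: "(nat \<Rightarrow> nat) \<Rightarrow> (nat \<Rightarrow> bool) \<Rightarrow> nat \<Rightarrow> bool"
  have integrable: "integrable (measure_pmf A) (F \<rho> adv)" for \<rho> adv
    by (rule integrable_measure_pmf_bounded[where C = 1]) (auto simp: F_def)
  have "measure_pmf.prob (estimates_dist ps T A \<rho>\<^sub>a adv\<^sub>a) S
      - measure_pmf.prob (estimates_dist ps T A \<rho>\<^sub>b adv\<^sub>b) S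
      = measure_pmf.expectation A (\<lambda>p. F \<rho>\<^sub>a adv\<^sub>a p - F \<rho>\<^sub>b adv\<^sub>b p)"
    unfolding prob_estimates_dist F_def[symmetric]
    by (rule Bochner_Integration.integral_diff[OF integrable integrable, symmetric])
  also have "\<dots> \<le> measure_pmf.expectation A (\<lambda>(s, e). g s)"
  proof (rule integral_mono_AE)
    show "integrable (measure_pmf A) (\<lambda>p. F \<rho>\<^sub>a adv\<^sub>a p - F \<rho>\<^sub>b adv\<^sub>b p)"
      using integrable by simp
    show "integrable (measure_pmf A) (\<lambda>(s, e). g s)"
      by (rule integrable_measure_pmf_bounded[where C = C]) (simp add: g_bounded split: prod.split)
    show "AE p in measure_pmf A. F \<rho>\<^sub>a adv\<^sub>a p - F \<rho>\<^sub>b adv\<^sub>b p \<le> (case p of (s, e) \<Rightarrow> g s)"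
    proof (rule AE_pmfI)
      fix p assume "p \<in> set_pmf A"
      moreover obtain s e where "p = (s, e)"
        by fastforce
      ultimately show "F \<rho>\<^sub>a adv\<^sub>a p - F \<rho>\<^sub>b adv\<^sub>b p \<le> (case p of (s, e) \<Rightarrow> g s)"
        using sep[of s e] by (simp add: F_def)
    qed
  qed
  finally show ?thesis .
qed

text \<open>Le Cam's two-point method: if the expectations of \<open>O\<^sub>i\<close> under the two states differ by more
  than \<open>2\<epsilon>\<close>, the two success events are disjoint, and as the two distributions of the estimates
  differ by less than \<open>1/3\<close> on every event, both events cannot have probability \<open>2/3\<close>.\<close>

lemma expval_diff_le_two_point:
  fixes A :: nonadaptive_alg and g :: "(nat \<Rightarrow> nat) \<Rightarrow> real"
  assumes sep: "\<And>s e Y. (s, e) \<in> set_pmf A \<Longrightarrow>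
      measure_pmf.prob (outcome_dist ps T s \<rho>\<^sub>a) (adv\<^sub>a s -` Y)
      - measure_pmf.prob (outcome_dist ps T s \<rho>\<^sub>b) (adv\<^sub>b s -` Y) \<le> g s"
    and g_bounded: "\<And>s. \<bar>g s\<bar> \<le> C"
    and g_small: "measure_pmf.expectation A (\<lambda>(s, e). g s) < 1/3"
    and success_a: "success_prob ps M T A \<rho>\<^sub>a adv\<^sub>a \<epsilon> \<ge> 2/3"
    and success_b: "success_prob ps M T A \<rho>\<^sub>b adv\<^sub>b \<epsilon> \<ge> 2/3"
    and i: "i < M"
  shows "expval (pauli_obs (ps i)) \<rho>\<^sub>a - expval (pauli_obs (ps i)) \<rho>\<^sub>b \<le> 2 * \<epsilon>"
proof (rule ccontr)
  assume far: "\<not> ?thesis"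
  define good where "good \<rho> = {E. \<forall>j<M. \<bar>E j - expval (pauli_obs (ps j)) \<rho>\<bar> \<le> \<epsilon>}" for \<rho>
  let ?P = "\<lambda>\<rho> adv. estimates_dist ps T A \<rho> adv"
  have "good \<rho>\<^sub>a \<subseteq> - good \<rho>\<^sub>b"
    using far i by (force simp: good_def abs_le_iff)
  then have "measure_pmf.prob (?P \<rho>\<^sub>b adv\<^sub>b) (good \<rho>\<^sub>a) \<le> 1 - measure_pmf.prob (?P \<rho>\<^sub>b adv\<^sub>b) (good \<rho>\<^sub>b)"
    using measure_pmf.finite_measure_mono[of "good \<rho>\<^sub>a" "- good \<rho>\<^sub>b"] measure_pmf.prob_compl[of "good \<rho>\<^sub>b"]
    by (simp add: Compl_eq_Diff_UNIV)
  moreover have "measure_pmf.prob (?P \<rho>\<^sub>b adv\<^sub>b) (good \<rho>\<^sub>b) \<ge> 2/3"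
    using success_b by (simp add: success_prob_def good_def)
  moreover have "measure_pmf.prob (?P \<rho>\<^sub>a adv\<^sub>a) (good \<rho>\<^sub>a)
      - measure_pmf.prob (?P \<rho>\<^sub>b adv\<^sub>b) (good \<rho>\<^sub>a) < 1/3"
    using prob_estimates_dist_diff_le[OF sep g_bounded] g_small by (rule order.strict_trans1)
  ultimately have "measure_pmf.prob (?P \<rho>\<^sub>a adv\<^sub>a) (good \<rho>\<^sub>a) < 2/3"
    by simp
  then show False
    using success_a by (simp add: success_prob_def good_def)
qed

definition measurement_count :: "nat \<Rightarrow> (nat \<Rightarrow> nat) \<Rightarrow> nat \<Rightarrow> nat" where
  "measurement_count T s i = card {t. t < T \<and> s t = i}"

lemma measurement_count_le: "measurement_count T s i \<le> T"
  unfolding measurement_count_def using card_mono[of "{..<T}" "{t. t < T \<and> s t = i}"] by auto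

lemma sum_measurement_count:
  assumes "\<forall>t<T. s t < M"
  shows "(\<Sum>i<M. measurement_count T s i) = T"
proof -
  have "(\<Sum>i<M. measurement_count T s i) = (\<Sum>i<M. \<Sum>t\<in>{t\<in>{..<T}. s t = i}. 1)"
    by (simp add: measurement_count_def conj_commute)
  also have "\<dots> = (\<Sum>t<T. 1)"
    using assms by (intro sum.group) auto
  finally show ?thesis
    by simp
qed

lemma exists_rarely_measured:
  assumes M: "M \<ge> 1" and valid: "valid_alg M T A"
  shows "\<exists>i<M. measure_pmf.expectation A (\<lambda>(s, e). real (measurement_count T s i)) \<le> T / M"
proof (rule ccontr)
  let ?E = "\<lambda>i. measure_pmf.expectation A (\<lambda>(s, e). real (measurement_count T s i))"
  assume "\<not> ?thesis"
  then have "(\<Sum>i<M. T / M) < (\<Sum>i<M. ?E i)"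
    using M by (intro sum_strict_mono) (auto simp: not_le lessThan_empty_iff)
  also have "(\<Sum>i<M. ?E i) = measure_pmf.expectation A (\<lambda>(s, e). \<Sum>i<M. real (measurement_count T s i))"
    by (subst Bochner_Integration.integral_sum[symmetric])
      (auto intro: integrable_measure_pmf_bounded[where C = T] simp: measurement_count_le split: prod.split
        intro!: Bochner_Integration.integral_cong)
  also have "\<dots> = measure_pmf.expectation A (\<lambda>_. real T)"
    using valid
    by (intro integral_cong_AE AE_pmfI)
      (auto simp: valid_alg_def sum_measurement_count of_nat_sum[symmetric] simp del: of_nat_sum)
  finally show False
    using M by simp
qed

lemma expectation_rare_cutoff_le:
  fixes A :: nonadaptive_alg and M :: nat
  assumes rare: "measure_pmf.expectation A (\<lambda>(s, e). real (measurement_count T s i)) \<le> T / M"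
    and M: "M \<ge> 1"
  shows "measure_pmf.expectation A
      (\<lambda>(s, e). if real (measurement_count T s i) \<le> 12 * real T / real M then 1/6 else 1 :: real)
    \<le> 1/4"
proof (cases "T = 0")
  case True
  then have const: "(\<lambda>(s, e :: (nat \<Rightarrow> bool) \<Rightarrow> nat \<Rightarrow> real).
      if real (measurement_count T s i) \<le> 12 * real T / real M then 1/6 else 1 :: real) = (\<lambda>_. 1/6)"
    using measurement_count_le[of T _ i] by (auto simp: fun_eq_iff)
  show ?thesis
    unfolding const by simp
next
  case False
  define K where "K = 12 * real T / M"
  have K: "K > 0"
    using False M by (simp add: K_def)
  let ?c = "\<lambda>p. real (measurement_count T (fst p) i)"
  have integrable: "integrable (measure_pmf A) ?c"
    by (rule integrable_measure_pmf_bounded[where C = T]) (simp add: measurement_count_le)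
  have "measure_pmf.expectation A (\<lambda>p. if ?c p \<le> K then 1/6 else 1 :: real)
      \<le> measure_pmf.expectation A (\<lambda>p. ?c p / K + 1/6)"
  proof (rule integral_mono)
    show "integrable (measure_pmf A) (\<lambda>p. if ?c p \<le> K then 1/6 else 1 :: real)"
      by (rule integrable_measure_pmf_bounded[where C = 1]) simp
    show "integrable (measure_pmf A) (\<lambda>p. ?c p / K + 1/6)"
      using integrable by simp
  qed (use K in \<open>auto simp: field_simps\<close>)
  also have "\<dots> = measure_pmf.expectation A ?c / K + 1/6"
    using integrable by simp
  also have "\<dots> \<le> (T / M) / K + 1/6"
    using divide_right_mono[OF rare[unfolded case_prod_unfold], of K] K by simp
  also have "(T / M) / K = 1/12"
    using False M by (simp add: K_def field_simps)
  finally show ?thesis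
    by (simp add: K_def case_prod_unfold)
qed

section \<open>The two regimes\<close>

lemma corrupted_regime_budget:
  fixes \<gamma> \<delta> k :: real and M T :: nat
  assumes k: "0 \<le> k" "k \<le> 12 * real T / real M" and M: "M \<ge> 1" and \<gamma>: "0 \<le> \<gamma>"
    and many_copies: "144 \<le> \<gamma>\<^sup>2 * real M * real T" and \<delta>: "0 \<le> \<delta>" "\<delta> \<le> \<gamma> * real M / 72"
  shows "\<gamma> * real T > 0" and "(k + k\<^sup>2 * \<delta>\<^sup>2) / (\<gamma> * real T)\<^sup>2 \<le> 1/6"
proof -
  let ?B = "\<gamma> * real T"
  have "\<gamma> \<noteq> 0" "T \<noteq> 0"
    using many_copies by (auto intro: ccontr)
  then show "?B > 0"
    using \<gamma> by simp
  then have B: "?B\<^sup>2 > 0"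
    by (rule zero_less_power)
  have "k / ?B\<^sup>2 \<le> (12 * real T / real M) / ?B\<^sup>2"
    using B by (intro divide_right_mono[OF k(2)]) simp
  also have "\<dots> = 12 / (\<gamma>\<^sup>2 * real M * real T)"
    using \<open>T \<noteq> 0\<close> by (simp add: field_simps power2_eq_square)
  also have "\<dots> \<le> 1/12"
    using many_copies by (simp add: field_simps)
  finally have variance: "k / ?B\<^sup>2 \<le> 1/12" .
  have "k * \<delta> \<le> (12 * real T / real M) * (\<gamma> * real M / 72)"
    using k \<delta> by (intro mult_mono) auto
  also have "\<dots> = ?B / 6"
    using M by (simp add: field_simps)
  finally have "(k * \<delta>)\<^sup>2 \<le> (?B / 6)\<^sup>2"
    using k \<delta> by (intro power_mono) auto
  then have bias: "(k * \<delta>)\<^sup>2 / ?B\<^sup>2 \<le> 1/36"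
    using B by (simp add: field_simps power2_eq_square)
  have "(k + k\<^sup>2 * \<delta>\<^sup>2) / ?B\<^sup>2 = k / ?B\<^sup>2 + (k * \<delta>)\<^sup>2 / ?B\<^sup>2"
    by (simp add: add_divide_distrib power_mult_distrib)
  then show "(k + k\<^sup>2 * \<delta>\<^sup>2) / ?B\<^sup>2 \<le> 1/6"
    using variance bias by linarith
qed

lemma reflect_corruption_separation:
  fixes \<gamma> \<delta> :: real and M :: nat and Y :: "(nat \<Rightarrow> bool) set"
  assumes P: "P \<subseteq> {..<T}" and few: "real (card P) \<le> 12 * real T / real M" and M: "M \<ge> 1"
    and \<gamma>: "0 \<le> \<gamma>" and many_copies: "144 \<le> \<gamma>\<^sup>2 * real M * real T"
    and \<delta>: "0 \<le> \<delta>" "\<delta> \<le> 1" "\<delta> \<le> \<gamma> * real M / 72"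
  defines "Z \<equiv> reflect_corruption P T (\<gamma> * real T) -` Y"
  shows "measure_pmf.prob (bernoulli_vec T (biased_on P ((1 + \<delta>) / 2))) Z
     - measure_pmf.prob (bernoulli_vec T (biased_on P ((1 - \<delta>) / 2))) Z \<le> 1/6"
proof -
  note budget = corrupted_regime_budget[OF of_nat_0_le_iff few M \<gamma> many_copies \<delta>(1,3)]
  have a: "0 \<le> (1 + \<delta>) / 2" "(1 + \<delta>) / 2 \<le> 1" and a': "(1 - \<delta>) / 2 = 1 - (1 + \<delta>) / 2"
    and bias: "2 * ((1 + \<delta>) / 2) - 1 = \<delta>"
    using \<delta> by (auto simp: field_simps)
  have "measure_pmf.prob (bernoulli_vec T (biased_on P ((1 + \<delta>) / 2))) Z
     - measure_pmf.prob (bernoulli_vec T (biased_on P ((1 - \<delta>) / 2))) Z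
     \<le> measure_pmf.prob (bernoulli_vec T (biased_on P ((1 + \<delta>) / 2)))
          {x. \<gamma> * real T < \<bar>real_of_int (walk P x T)\<bar>}"
    unfolding a' Z_def by (rule prob_reflect_corruption_diff_le[OF P a])
  also have "\<dots> \<le> (real (card P) + (real (card P))\<^sup>2 * \<delta>\<^sup>2) / (\<gamma> * real T)\<^sup>2"
    using prob_abs_walk_gt_le[OF P a budget(1)] unfolding bias .
  also have "\<dots> \<le> 1/6"
    by (rule budget(2))
  finally show ?thesis .
qed

lemma uncorrupted_regime_budget:
  fixes \<gamma> \<delta> k :: real and M T :: nat
  assumes few: "k \<le> 12 * real T / real M" and M: "M \<ge> 1"
    and few_copies: "\<gamma>\<^sup>2 * real M * real T < 144" and \<delta>: "0 \<le> \<delta>" "\<delta> \<le> \<gamma> * real M / 360"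
  shows "k * \<delta>\<^sup>2 \<le> 1/75"
proof -
  have "\<delta>\<^sup>2 \<le> (\<gamma> * real M / 360)\<^sup>2"
    using \<delta> by (intro power_mono) auto
  then have "k * \<delta>\<^sup>2 \<le> (12 * real T / real M) * (\<gamma> * real M / 360)\<^sup>2"
    using few by (intro mult_mono) auto
  also have "\<dots> = 12 * (\<gamma>\<^sup>2 * real M * real T) / 129600"
    using M by (simp add: field_simps power2_eq_square)
  also have "\<dots> \<le> 1/75"
    using few_copies by linarith
  finally show ?thesis .
qed

lemma uncorrupted_separation:
  fixes \<gamma> \<delta> :: real and M :: nat
  assumes P: "P \<subseteq> {..<T}" and few: "real (card P) \<le> 12 * real T / real M" and M: "M \<ge> 1"
    and few_copies: "\<gamma>\<^sup>2 * real M * real T < 144" and \<delta>: "0 \<le> \<delta>" "\<delta> \<le> 1" "\<delta> \<le> \<gamma> * real M / 360"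
  shows "measure_pmf.prob (bernoulli_vec T (biased_on P ((1 + \<delta>) / 2))) Y
     - measure_pmf.prob (bernoulli_vec T (biased_on P ((1 + 0) / 2))) Y \<le> 1/6"
proof -
  let ?k = "real (card P)"
  note budget = uncorrupted_regime_budget[OF few M few_copies \<delta>(1,3)]
  have "(1 + \<delta>\<^sup>2) ^ card P \<le> exp (\<delta>\<^sup>2) ^ card P"
    by (intro power_mono) (auto simp: add.commute exp_ge_add_one_self)
  also have "\<dots> = exp (?k * \<delta>\<^sup>2)"
    by (simp add: exp_of_nat_mult)
  also have "\<dots> \<le> 1 + 2 * (?k * \<delta>\<^sup>2)"
    using budget by (intro real_exp_bound_lemma) auto
  finally have chi_square: "(1 + \<delta>\<^sup>2) ^ card P \<le> 1 + 2 * (?k * \<delta>\<^sup>2)" .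
  have bias: "2 * ((1 + \<delta>) / 2) - 1 = \<delta>" and fair: "biased_on P ((1 + 0) / 2) = (\<lambda>_. 1/2)"
    by (auto simp: field_simps biased_on_def)
  have "measure_pmf.prob (bernoulli_vec T (biased_on P ((1 + \<delta>) / 2))) Y
     - measure_pmf.prob (bernoulli_vec T (biased_on P ((1 + 0) / 2))) Y
     \<le> ((1 + (2 * ((1 + \<delta>) / 2) - 1)\<^sup>2) ^ card P - 1) / (2 * (1/6)) + (1/6) / 2"
    unfolding fair using \<delta> by (intro prob_biased_on_diff_fair_le[OF P]) auto
  also have "\<dots> \<le> 1/6"
    unfolding bias using chi_square budget by simp
  finally show ?thesis .
qed

section \<open>Distinct non-identity Pauli observables\<close>

locale distinct_paulis =
  fixes N M :: nat and ps :: "nat \<Rightarrow> nat list"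
  assumes pauli: "\<forall>i<M. is_pauli_string N (ps i) \<and> ps i \<noteq> replicate N 0"
    and distinct: "inj_on ps {..<M}"
begin

abbreviation obs :: "nat \<Rightarrow> complex mat" where
  "obs i \<equiv> pauli_obs (ps i)"

abbreviation state :: "real \<Rightarrow> nat \<Rightarrow> complex mat" where
  "state \<delta> i \<equiv> perturbed_state (2 ^ N) \<delta> (obs i)"

lemma obs_carrier_mat: "i < M \<Longrightarrow> obs i \<in> carrier_mat (2 ^ N) (2 ^ N)"
  using pauli pauli_obs_carrier_mat[of "ps i"] by (simp add: is_pauli_string_def)

lemma mtrace_obs: "i < M \<Longrightarrow> mtrace (obs i) = 0"
  using pauli mtrace_pauli_obs by blast

lemma mtrace_obs_mult: "i < M \<Longrightarrow> j < M \<Longrightarrow> mtrace (obs j * obs i) = (if j = i then 2 ^ N else 0)"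
  using pauli distinct by (simp add: mtrace_pauli_obs_mult is_pauli_string_def inj_on_eq_iff)

lemma density_matrix_state: "i < M \<Longrightarrow> \<bar>\<delta>\<bar> \<le> 1 \<Longrightarrow> density_matrix (2 ^ N) (state \<delta> i)"
  using pauli pauli_obs_square[of "ps i"]
  by (intro density_matrix_perturbed_state obs_carrier_mat pauli_obs_hermitian mtrace_obs)
    (auto simp: is_pauli_string_def)

lemma expval_state: "i < M \<Longrightarrow> j < M \<Longrightarrow> expval (obs j) (state \<delta> i) = (if j = i then \<delta> else 0)"
  by (simp add: expval_perturbed_state obs_carrier_mat mtrace_obs mtrace_obs_mult)

lemma outcome_dist_state:
  assumes "i < M" "\<forall>t<T. s t < M"
  shows "outcome_dist ps T s (state \<delta> i) = bernoulli_vec T (biased_on {t. t < T \<and> s t = i} ((1 + \<delta>) / 2))"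
  unfolding outcome_dist_def bernoulli_vec_def
proof (rule Pi_pmf_cong[OF refl refl])
  fix t assume "t \<in> {..<T}"
  then show "bernoulli_pmf (born_prob (obs (s t)) (state \<delta> i) True)
      = bernoulli_pmf (biased_on {t. t < T \<and> s t = i} ((1 + \<delta>) / 2) t)"
    using assms
    by (simp add: born_prob_True[of _ "2 ^ N"] obs_carrier_mat perturbed_state_carrier_mat
        mtrace_perturbed_state mtrace_obs expval_state biased_on_def)
qed

lemma perturbation_le_error:
  assumes M: "M \<ge> 1" and valid: "valid_alg M T A"
    and success: "\<forall>\<rho> adv. density_matrix (2 ^ N) \<rho> \<longrightarrow> admissible_adversary \<gamma> T adv \<longrightarrow>
        success_prob ps M T A \<rho> adv \<epsilon> \<ge> 2/3"
    and i: "i < M"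
    and rare: "measure_pmf.expectation A (\<lambda>(s, e). real (measurement_count T s i)) \<le> T / M"
    and \<delta>: "\<bar>\<delta>\<^sub>a\<bar> \<le> 1" "\<bar>\<delta>\<^sub>b\<bar> \<le> 1"
    and adv: "admissible_adversary \<gamma> T adv\<^sub>a" "admissible_adversary \<gamma> T adv\<^sub>b"
    and sep: "\<And>s Y. \<forall>t<T. s t < M \<Longrightarrow> real (measurement_count T s i) \<le> 12 * real T / real M \<Longrightarrow>
        measure_pmf.prob (bernoulli_vec T (biased_on {t. t < T \<and> s t = i} ((1 + \<delta>\<^sub>a) / 2))) (adv\<^sub>a s -` Y)
        - measure_pmf.prob (bernoulli_vec T (biased_on {t. t < T \<and> s t = i} ((1 + \<delta>\<^sub>b) / 2))) (adv\<^sub>b s -` Y)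
        \<le> 1/6"
  shows "\<delta>\<^sub>a - \<delta>\<^sub>b \<le> 2 * \<epsilon>"
proof -
  define g where
    "g s = (if real (measurement_count T s i) \<le> 12 * real T / real M then 1/6 else 1 :: real)" for s
  have "measure_pmf.prob (outcome_dist ps T s (state \<delta>\<^sub>a i)) (adv\<^sub>a s -` Y)
      - measure_pmf.prob (outcome_dist ps T s (state \<delta>\<^sub>b i)) (adv\<^sub>b s -` Y) \<le> g s"
    if "(s, e) \<in> set_pmf A" for s e Y
  proof -
    have s: "\<forall>t<T. s t < M"
      using valid that by (auto simp: valid_alg_def)
    have "measure_pmf.prob (outcome_dist ps T s (state \<delta>\<^sub>a i)) (adv\<^sub>a s -` Y)
        - measure_pmf.prob (outcome_dist ps T s (state \<delta>\<^sub>b i)) (adv\<^sub>b s -` Y) \<le> 1"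
      using measure_pmf.prob_le_1[of "outcome_dist ps T s (state \<delta>\<^sub>a i)" "adv\<^sub>a s -` Y"]
        measure_nonneg[of "measure_pmf (outcome_dist ps T s (state \<delta>\<^sub>b i))" "adv\<^sub>b s -` Y"]
      by linarith
    then show ?thesis
      using sep[OF s] by (simp add: g_def outcome_dist_state[OF i s])
  qed
  moreover have "\<bar>g s\<bar> \<le> 1" for s
    by (simp add: g_def)
  moreover have "measure_pmf.expectation A (\<lambda>(s, e). g s) < 1/3"
    using expectation_rare_cutoff_le[OF rare M] by (simp add: g_def)
  moreover have "success_prob ps M T A (state \<delta>\<^sub>a i) adv\<^sub>a \<epsilon> \<ge> 2/3"
    and "success_prob ps M T A (state \<delta>\<^sub>b i) adv\<^sub>b \<epsilon> \<ge> 2/3"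
    using success density_matrix_state[OF i] \<delta> adv by blast+
  ultimately have "expval (obs i) (state \<delta>\<^sub>a i) - expval (obs i) (state \<delta>\<^sub>b i) \<le> 2 * \<epsilon>"
    by (rule expval_diff_le_two_point[OF _ _ _ _ _ i])
  then show ?thesis
    using i by (simp add: expval_state)
qed

lemma error_lower_bound:
  assumes M: "M \<ge> 1" and \<gamma>: "0 \<le> \<gamma>" and valid: "valid_alg M T A"
    and success: "\<forall>\<rho> adv. density_matrix (2 ^ N) \<rho> \<longrightarrow> admissible_adversary \<gamma> T adv \<longrightarrow>
        success_prob ps M T A \<rho> adv \<epsilon> \<ge> 2/3"
  shows "min 1 (\<gamma> * real M) / 720 \<le> \<epsilon>"
proof -
  obtain i where i: "i < M"
    and rare: "measure_pmf.expectation A (\<lambda>(s, e). real (measurement_count T s i)) \<le> T / M"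
    using exists_rarely_measured[OF M valid] by blast
  define m where "m = min 1 (\<gamma> * real M)"
  have m: "0 \<le> m" "m \<le> 1" "m \<le> \<gamma> * real M"
    using \<gamma> by (auto simp: m_def)
  have P: "{t. t < T \<and> s t = i} \<subseteq> {..<T}" for s
    by auto
  show ?thesis
  proof (cases "144 \<le> \<gamma>\<^sup>2 * real M * real T")
    case True
    define adv where "adv s = reflect_corruption {t. t < T \<and> s t = i} T (\<gamma> * real T)" for s
    have "admissible_adversary \<gamma> T adv"
      using reflect_corruption_changes \<gamma> by (simp add: admissible_adversary_def adv_def)
    then have "m / 72 - (- m / 72) \<le> 2 * \<epsilon>"
      using m True reflect_corruption_separation[OF P _ M \<gamma> True, where \<delta> = "m / 72"]
      by (intro perturbation_le_error[OF M valid success i rare])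
        (auto simp: adv_def measurement_count_def diff_divide_distrib)
    then show ?thesis
      using m unfolding m_def[symmetric] by linarith
  next
    case False
    have "admissible_adversary \<gamma> T (\<lambda>s x. x)"
      using \<gamma> by (simp add: admissible_adversary_def)
    then have "m / 360 - 0 \<le> 2 * \<epsilon>"
      using m False uncorrupted_separation[OF P _ M, where \<gamma> = \<gamma> and \<delta> = "m / 360"]
      by (intro perturbation_le_error[OF M valid success i rare]) (auto simp: measurement_count_def)
    then show ?thesis
      using m unfolding m_def[symmetric] by linarith
  qed
qed

end

theorem theorem8:
  "\<exists>c>0. \<forall>(N::nat) (M::nat) (ps :: nat \<Rightarrow> nat list) (\<gamma>::real) (T::nat) (A::nonadaptive_alg) (\<epsilon>::real).
     M \<ge> 1 \<longrightarrow>
     (\<forall>i<M. is_pauli_string N (ps i) \<and> ps i \<noteq> replicate N 0) \<longrightarrow>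
     inj_on ps {..<M} \<longrightarrow>
     0 \<le> \<gamma> \<longrightarrow> \<gamma> \<le> 1 \<longrightarrow>
     valid_alg M T A \<longrightarrow>
     (\<forall>\<rho> adv. density_matrix (2 ^ N) \<rho> \<longrightarrow> admissible_adversary \<gamma> T adv \<longrightarrow>
        success_prob ps M T A \<rho> adv \<epsilon> \<ge> 2/3) \<longrightarrow>
     \<epsilon> \<ge> c * min 1 (\<gamma> * real M)"
proof (intro exI[of _ "1/720 :: real"] conjI allI impI)
  fix N M :: nat and ps :: "nat \<Rightarrow> nat list" and \<gamma> :: real and T :: nat and A :: nonadaptive_alg
    and \<epsilon> :: real
  assume M: "M \<ge> 1" and pauli: "\<forall>i<M. is_pauli_string N (ps i) \<and> ps i \<noteq> replicate N 0"
    and distinct: "inj_on ps {..<M}" and \<gamma>: "0 \<le> \<gamma>" and "\<gamma> \<le> 1" and valid: "valid_alg M T A"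
    and success: "\<forall>\<rho> adv. density_matrix (2 ^ N) \<rho> \<longrightarrow> admissible_adversary \<gamma> T adv \<longrightarrow>
        success_prob ps M T A \<rho> adv \<epsilon> \<ge> 2/3"
  interpret distinct_paulis N M ps
    using pauli distinct by unfold_locales
  show "\<epsilon> \<ge> 1/720 * min 1 (\<gamma> * real M)"
    using error_lower_bound[OF M \<gamma> valid success] by simp
qed simp

end
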